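(* Let $\bm{P}$ be a probability measure on $\mathbb{X}^\infty$ of the form $\bm{P}(x)=\int\bm{P}_{\bm{\theta}}(x)\,d\bm{\pi}(\bm{\theta})$, and suppose $\bm{P}$ is computable and $c:\mathbb{N}\to\mathbb{Y}^+$ is a computable prefix code for natural numbers. Then the Bayesian code $C$ with respect to $(\{\bm{P}_{\bm{\theta}}\},\bm{\pi},c)$ is $(\mathcal{B}_{\bm{P}},|c(n)|+1)$-superuniversal; that is, $C$ is a computable prefix code and for every $\bm{x}\in\mathcal{B}_{\bm{P}}$, $|C(x^n)|-K(x^n)<|c(n)|+1$ holds for all but finitely many $n\in\mathbb{N}$.
   Context: $\mathbb{X}$ is a countable alphabet, $\mathbb{Y}=\{0,1,\ldots,D-1\}$, $\log$ is logarithm to base $D$, $x^n$ is the length-$n$ prefix of $\bm{x}\in\mathbb{X}^\infty$, and $K$ is prefix Kolmogorov complexity for a fixed universal prefix machine. A code $C$ is computable if both $C$ and $C^{-1}$ are computable. $\{\bm{P}_{\bm{\theta}}:\bm{\theta}\in\bm{\Theta}\}$ is a measurably parameterized family of probability measures on $\mathbb{X}^\infty$ and $\bm{\pi}$ a prior probability measure on $\bm{\Theta}$. The Bayesian code is $C(x)=c(|x|)\bm{C}(x)$ where $\bm{C}(x)$ is the Shannon–Fano codeword for $x$ with respect to $\bm{P}$, a codeword of length $\lceil-\log\bm{P}(x)\rceil$ from a prefix code among strings of each fixed length, so $|C(x)|=|c(|x|)|+\lceil-\log\bm{P}(x)\rceil$. $\bm{P}$ is computable if $(x,m)\mapsto\lfloor\bm{P}(x)D^m\rfloor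 D^{-m}$ is computable. $\mathcal{B}_{\bm{P}}$ (the $\bm{P}$-Barron random sequences) is the set of $\bm{x}\in\mathbb{X}^\infty$ such that $K(x^n)+\log\bm{P}(x^n)>0$ for all but finitely many $n$. *)

theory Defs
  imports "HOL-Probability.Probability" "HOL-Library.Nat_Bijection" "HOL-Library.Sublist"
begin

fun prec :: "(nat list \<Rightarrow> nat option) \<Rightarrow> (nat list \<Rightarrow> nat option) \<Rightarrow> nat \<Rightarrow> nat list \<Rightarrow> nat option" where
  "prec f g 0 xs = f xs"
| "prec f g (Suc y) xs = (case prec f g y xs of None \<Rightarrow> None | Some r \<Rightarrow> g (y # r # xs))"

definition mu :: "(nat list \<Rightarrow> nat option) \<Rightarrow> nat list \<Rightarrow> nat option" where
  "mu f xs = (if \<exists>y. f (y # xs) = Some 0 \<and> (\<forall>z<y. f (z # xs) \<noteq> None)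
              then Some (LEAST y. f (y # xs) = Some 0 \<and> (\<forall>z<y. f (z # xs) \<noteq> None))
              else None)"

text \<open>partrec n f: f is a partial recursive function of arity n (its values on
  argument lists of length different from n are irrelevant).\<close>
inductive partrec :: "nat \<Rightarrow> (nat list \<Rightarrow> nat option) \<Rightarrow> bool" where
  zero: "partrec n (\<lambda>_. Some 0)"
| succ: "partrec 1 (\<lambda>xs. Some (Suc (hd xs)))"
| proj: "i < n \<Longrightarrow> partrec n (\<lambda>xs. Some (xs ! i))"
| comp: "partrec m g \<Longrightarrow> (\<And>i. i < m \<Longrightarrow> partrec n (fs i)) \<Longrightarrow>
         partrec n (\<lambda>xs. if (\<forall>i<m. fs i xs \<noteq> None)
                          then g (map (\<lambda>i. the (fs i xs)) [0..<m]) else None)"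
| prim: "partrec n f \<Longrightarrow> partrec (Suc (Suc n)) g \<Longrightarrow>
         partrec (Suc n) (\<lambda>xs. prec f g (hd xs) (tl xs))"
| minim: "partrec (Suc n) f \<Longrightarrow> partrec n (mu f)"
| ext: "partrec n f \<Longrightarrow> (\<And>xs. length xs = n \<Longrightarrow> g xs = f xs) \<Longrightarrow> partrec n g"

definition computable1 :: "(nat \<Rightarrow> nat option) \<Rightarrow> bool" where
  "computable1 f \<longleftrightarrow> partrec 1 (\<lambda>xs. f (hd xs))"

text \<open>The countable alphabet is identified with an initial segment of nat
  (all of nat if it is infinite) via the fixed enumeration to_nat.\<close>
definition sym_code :: "'a::countable \<Rightarrow> nat" where
  "sym_code a = card {b::'a. to_nat b < to_nat a}"

definition str_code :: "'a::countable list \<Rightarrow> nat" where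
  "str_code x = list_encode (map sym_code x)"

text \<open>Strings over Y = {0..D-1} are nat lists w with set w \<subseteq> {..<D}; they are
  encoded by list_encode.\<close>

definition seqspace :: "(nat \<Rightarrow> 'a) measure" where
  "seqspace = PiM UNIV (\<lambda>_. count_space UNIV)"

definition cyl :: "'a list \<Rightarrow> (nat \<Rightarrow> 'a) set" where
  "cyl x = {\<omega>. \<forall>i<length x. \<omega> i = x ! i}"

definition pref :: "(nat \<Rightarrow> 'a) \<Rightarrow> nat \<Rightarrow> 'a list" where
  "pref \<omega> n = map \<omega> [0..<n]"

definition computable_measure :: "nat \<Rightarrow> (nat \<Rightarrow> 'a::countable) measure \<Rightarrow> bool" where
  "computable_measure D P \<longleftrightarrow>
     (\<exists>f. computable1 f \<and>
        (\<forall>x m. f (prod_encode (str_code x, m)) = Some (nat \<lfloor>measure P (cyl x) * real D ^ m\<rfloor>)))"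

definition nat_prefix_code :: "nat \<Rightarrow> (nat \<Rightarrow> nat list) \<Rightarrow> bool" where
  "nat_prefix_code D c \<longleftrightarrow> (\<forall>n. c n \<noteq> [] \<and> set (c n) \<subseteq> {..<D}) \<and>
     (\<forall>m n. prefix (c m) (c n) \<longrightarrow> m = n)"

definition computable_nat_code :: "nat \<Rightarrow> (nat \<Rightarrow> nat list) \<Rightarrow> bool" where
  "computable_nat_code D c \<longleftrightarrow> nat_prefix_code D c \<and>
     computable1 (\<lambda>k. Some (list_encode (c k))) \<and>
     (\<exists>g. computable1 g \<and> (\<forall>w. set w \<subseteq> {..<D} \<longrightarrow>
         g (list_encode w) = (if w \<in> range c then Some (inv c w) else None)))"

definition prefix_code :: "nat \<Rightarrow> ('a list \<Rightarrow> nat list option) \<Rightarrow> bool" where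
  "prefix_code D C \<longleftrightarrow> (\<forall>x w. C x = Some w \<longrightarrow> set w \<subseteq> {..<D}) \<and>
     (\<forall>x y u v. C x = Some u \<longrightarrow> C y = Some v \<longrightarrow> prefix u v \<longrightarrow> x = y)"

definition computable_code :: "nat \<Rightarrow> ('a::countable list \<Rightarrow> nat list option) \<Rightarrow> bool" where
  "computable_code D C \<longleftrightarrow>
     (\<exists>f. computable1 f \<and> (\<forall>x. f (str_code x) = map_option list_encode (C x))) \<and>
     (\<exists>g. computable1 g \<and> (\<forall>w. set w \<subseteq> {..<D} \<longrightarrow>
         g (list_encode w) = (if \<exists>x. C x = Some w
                              then Some (str_code (THE x. C x = Some w)) else None)))"

definition prefix_machine :: "nat \<Rightarrow> (nat list \<Rightarrow> 'a::countable list option) \<Rightarrow> bool" where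
  "prefix_machine D M \<longleftrightarrow> (\<forall>p. M p \<noteq> None \<longrightarrow> set p \<subseteq> {..<D}) \<and>
     (\<forall>p q. M p \<noteq> None \<longrightarrow> M q \<noteq> None \<longrightarrow> prefix p q \<longrightarrow> p = q) \<and>
     (\<exists>f. computable1 f \<and> (\<forall>p. set p \<subseteq> {..<D} \<longrightarrow>
         f (list_encode p) = map_option str_code (M p)))"

definition universal_prefix_machine :: "nat \<Rightarrow> (nat list \<Rightarrow> 'a::countable list option) \<Rightarrow> bool" where
  "universal_prefix_machine D U \<longleftrightarrow> prefix_machine D U \<and>
     (\<forall>M. prefix_machine D M \<longrightarrow> (\<exists>\<sigma>. set \<sigma> \<subseteq> {..<D} \<and> (\<forall>p. U (\<sigma> @ p) = M p)))"

definition KC :: "(nat list \<Rightarrow> 'a list option) \<Rightarrow> 'a list \<Rightarrow> nat" where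
  "KC U x = (LEAST n. \<exists>p. U p = Some x \<and> length p = n)"

text \<open>Since log 0 = -infinity mathematically, K(x^n) + log P(x^n) > 0 includes P(x^n) > 0.\<close>
definition barron_random :: "nat \<Rightarrow> (nat list \<Rightarrow> 'a list option) \<Rightarrow> (nat \<Rightarrow> 'a) measure \<Rightarrow> (nat \<Rightarrow> 'a) set" where
  "barron_random D U P = {\<omega>. \<forall>\<^sub>F n in sequentially.
      measure P (cyl (pref \<omega> n)) > 0 \<and>
      real (KC U (pref \<omega> n)) + log (real D) (measure P (cyl (pref \<omega> n))) > 0}"

definition shannon_fano_code :: "nat \<Rightarrow> (nat \<Rightarrow> 'a) measure \<Rightarrow> ('a list \<Rightarrow> nat list option) \<Rightarrow> bool" where
  "shannon_fano_code D P C' \<longleftrightarrow>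
     (\<forall>x. C' x \<noteq> None \<longleftrightarrow> measure P (cyl x) > 0) \<and>
     (\<forall>x w. C' x = Some w \<longrightarrow> set w \<subseteq> {..<D} \<and>
        length w = nat \<lceil>- log (real D) (measure P (cyl x))\<rceil>) \<and>
     (\<forall>x y u v. length x = length y \<longrightarrow> x \<noteq> y \<longrightarrow> C' x = Some u \<longrightarrow> C' y = Some v \<longrightarrow>
        \<not> prefix u v)"

definition bayes_code :: "(nat \<Rightarrow> nat list) \<Rightarrow> ('a list \<Rightarrow> nat list option) \<Rightarrow> 'a list \<Rightarrow> nat list option" where
  "bayes_code c C' x = map_option (\<lambda>w. c (length x) @ w) (C' x)"

end

(*
  A Bayesian codeword consists of c(n) followed by a Shannon-Fano codeword of length
  ceiling(-log P(x)); on a Barron random sequence -log P(x^n) < K(x^n) for almost all n, which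
  gives the length bound. The substance is computability: P(x) is only available through its
  approximations floor(P(x) D^m), so the Shannon-Fano codewords of the strings of each length are
  produced by an online Kraft-Chaitin allocation in the D-ary tree. The requests
  (x, ceiling(-log P(x))) can be enumerated effectively and satisfy Kraft's inequality. A request
  of level l is served by a free node on the deepest level k <= l, which is split down to level l;
  the free nodes stay incomparable with the allocated ones and at most D - 1 of them lie on any
  level, so some free node of level <= l always exists. The allocation is total recursive in
  the approximations of P, which makes the encoder partial recursive, and the decoder is an
  unbounded search over the requests.
*)

theory Submission
  imports Defs
begin


section \<open>Total recursive functions\<close>

definition total_rec :: "nat \<Rightarrow> (nat list \<Rightarrow> nat) \<Rightarrow> bool" where
  "total_rec n h \<longleftrightarrow> partrec n (\<lambda>xs. Some (h xs))"

definition rec_pred :: "nat \<Rightarrow> (nat list \<Rightarrow> bool) \<Rightarrow> bool" where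
  "rec_pred n P \<longleftrightarrow> total_rec n (\<lambda>xs. if P xs then 1 else 0)"

named_theorems total_rec_intros

lemma total_rec_cong: "total_rec n f \<Longrightarrow> (\<And>xs. length xs = n \<Longrightarrow> g xs = f xs) \<Longrightarrow> total_rec n g"
  unfolding total_rec_def by (rule partrec.ext) auto

lemma rec_pred_cong: "rec_pred n P \<Longrightarrow> (\<And>xs. length xs = n \<Longrightarrow> Q xs = P xs) \<Longrightarrow> rec_pred n Q"
  unfolding rec_pred_def by (erule total_rec_cong) simp

lemma total_rec_zero: "total_rec n (\<lambda>_. 0)"
  unfolding total_rec_def by (rule partrec.zero)

lemma total_rec_succ: "total_rec 1 (\<lambda>xs. Suc (hd xs))"
  unfolding total_rec_def by (rule partrec.succ)

lemma total_rec_proj [total_rec_intros]: "i < n \<Longrightarrow> total_rec n (\<lambda>xs. xs ! i)"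
  unfolding total_rec_def by (rule partrec.proj)

lemma total_rec_comp: "total_rec m g \<Longrightarrow> (\<And>i. i < m \<Longrightarrow> total_rec n (fs i)) \<Longrightarrow>
   total_rec n (\<lambda>xs. g (map (\<lambda>i. fs i xs) [0..<m]))"
  unfolding total_rec_def
  by (drule partrec.comp[where fs="\<lambda>i xs. Some (fs i xs)"]) auto

lemma prec_Some: "prec (\<lambda>xs. Some (f xs)) (\<lambda>xs. Some (g xs)) y zs
   = Some (rec_nat (f zs) (\<lambda>y r. g (y # r # zs)) y)"
  by (induction y) auto

lemma total_rec_prim: "total_rec n f \<Longrightarrow> total_rec (Suc (Suc n)) g \<Longrightarrow>
   total_rec (Suc n) (\<lambda>xs. rec_nat (f (tl xs)) (\<lambda>y r. g (y # r # tl xs)) (hd xs))"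
  unfolding total_rec_def by (drule (1) partrec.prim) (simp add: prec_Some)

lemma total_rec_reindex:
  assumes "total_rec m h" "\<And>i. i < m \<Longrightarrow> \<sigma> i < n"
    and "\<And>xs. length xs = n \<Longrightarrow> g xs = h (map (\<lambda>i. xs ! \<sigma> i) [0..<m])"
  shows "total_rec n g"
  using total_rec_comp[OF assms(1), of n "\<lambda>i xs. xs ! \<sigma> i"] total_rec_proj assms(2,3)
  by (auto intro: total_rec_cong)

lemma total_rec_rec_nat:
  assumes cnt: "total_rec n cnt" and base: "total_rec n base" and step: "total_rec (Suc (Suc n)) step"
  shows "total_rec n (\<lambda>xs. rec_nat (base xs) (\<lambda>y r. step (y # r # xs)) (cnt xs))"
proof -
  define args where "args = (\<lambda>i xs. if i = 0 then cnt xs else xs ! (i - 1 :: nat))"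
  have "total_rec n (\<lambda>xs. (\<lambda>ys. rec_nat (base (tl ys)) (\<lambda>y r. step (y # r # tl ys)) (hd ys))
           (map (\<lambda>i. args i xs) [0..<Suc n]))"
  proof (rule total_rec_comp[OF total_rec_prim[OF base step]])
    fix i assume "i < Suc n"
    then show "total_rec n (args i)"
      unfolding args_def by (cases "i = 0") (auto simp: cnt intro: total_rec_proj)
  qed
  moreover have "map (\<lambda>i. args i xs) [0..<Suc n] = cnt xs # xs" if "length xs = n" for xs
    using that unfolding args_def
    by (intro nth_equalityI) (auto simp: nth_Cons' simp del: upt_Suc)
  ultimately show ?thesis by (elim total_rec_cong) (simp del: upt_Suc)
qed

lemma total_rec_rec_natI:
  assumes "total_rec n cnt" "total_rec n base" "total_rec (Suc (Suc n)) step"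
    and "\<And>xs. length xs = n \<Longrightarrow> F xs = rec_nat (base xs) (\<lambda>y r. step (y # r # xs)) (cnt xs)"
  shows "total_rec n F"
  using total_rec_rec_nat[OF assms(1-3)] assms(4) by (rule total_rec_cong)

lemma total_rec_comp1: "total_rec 1 (\<lambda>xs. h (xs ! 0)) \<Longrightarrow> total_rec n f \<Longrightarrow> total_rec n (\<lambda>xs. h (f xs))"
  by (drule total_rec_comp[where fs="\<lambda>i. f" and n=n]) auto

lemma total_rec_comp2: "total_rec 2 (\<lambda>xs. h (xs ! 0) (xs ! 1)) \<Longrightarrow> total_rec n f \<Longrightarrow> total_rec n g \<Longrightarrow>
   total_rec n (\<lambda>xs. h (f xs) (g xs))"
  by (drule total_rec_comp[where fs="\<lambda>i. if i = 0 then f else g" and n=n]) (auto simp: numeral_2_eq_2)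

lemma total_rec_comp3: "total_rec 3 (\<lambda>xs. h (xs ! 0) (xs ! 1) (xs ! 2)) \<Longrightarrow>
   total_rec n f \<Longrightarrow> total_rec n g \<Longrightarrow> total_rec n k \<Longrightarrow> total_rec n (\<lambda>xs. h (f xs) (g xs) (k xs))"
  by (drule total_rec_comp[where fs="\<lambda>i. if i = 0 then f else if i = 1 then g else k" and n=n])
    (auto simp: numeral_3_eq_3)

lemma rec_pred_comp1: "rec_pred 1 (\<lambda>xs. P (xs ! 0)) \<Longrightarrow> total_rec n f \<Longrightarrow> rec_pred n (\<lambda>xs. P (f xs))"
  unfolding rec_pred_def by (rule total_rec_comp1)

lemma rec_pred_comp2: "rec_pred 2 (\<lambda>xs. P (xs ! 0) (xs ! 1)) \<Longrightarrow> total_rec n f \<Longrightarrow> total_rec n g \<Longrightarrow>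
   rec_pred n (\<lambda>xs. P (f xs) (g xs))"
  unfolding rec_pred_def by (rule total_rec_comp2)

lemma total_rec_tl: "total_rec n g \<Longrightarrow> total_rec (Suc n) (\<lambda>ys. g (tl ys))"
  by (erule total_rec_reindex[where \<sigma>=Suc]) (auto intro!: arg_cong[where f=g] nth_equalityI simp: nth_tl)

lemma total_rec_drop1: "total_rec (Suc n) g \<Longrightarrow> total_rec (Suc (Suc n)) (\<lambda>ys. g (hd ys # drop 2 ys))"
proof (erule total_rec_reindex[where \<sigma>="\<lambda>i. if i = 0 then 0 else Suc i"])
  fix ys :: "nat list" assume "length ys = Suc (Suc n)"
  then obtain a b zs where "ys = a # b # zs" "length zs = n" by (metis length_Suc_conv)
  then show "g (hd ys # drop 2 ys) = g (map (\<lambda>i. ys ! (if i = 0 then 0 else Suc i)) [0..<Suc n])"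
    by (auto intro!: arg_cong[where f=g] nth_equalityI simp: nth_Cons' simp del: upt_Suc)
qed simp

lemma rec_pred_drop1: "rec_pred (Suc n) P \<Longrightarrow> rec_pred (Suc (Suc n)) (\<lambda>ys. P (hd ys # drop 2 ys))"
  unfolding rec_pred_def by (rule total_rec_drop1)

lemma hd_eq_nth_zero [simp]: "length xs = Suc n \<Longrightarrow> hd xs = xs ! 0"
  by (cases xs) auto

lemma total_rec_const [total_rec_intros]: "total_rec n (\<lambda>_. c)"
proof (induction c)
  case 0 then show ?case by (rule total_rec_zero)
next
  case (Suc c)
  have "total_rec 1 (\<lambda>xs. Suc (xs ! 0))" by (rule total_rec_cong[OF total_rec_succ]) (auto simp: hd_conv_nth)
  from total_rec_comp1[OF this Suc] show ?case .
qed

lemma rec_nat_fun_cong: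
  assumes "\<And>y r. f y r = g y r"
  shows "rec_nat a f n = rec_nat a g n"
proof -
  have "f = g" using assms by (auto intro!: ext)
  then show ?thesis by simp
qed

lemma rec_nat_Suc_eq_add: "rec_nat a (\<lambda>y r. Suc r) b = a + b" by (induct b) auto
lemma rec_nat_pred: "rec_nat 0 (\<lambda>y r. y) b = b - Suc 0" by (induct b) auto
lemma rec_nat_diff: "rec_nat a (\<lambda>y r. r - Suc 0) b = a - b" by (induct b) auto
lemma rec_nat_mult: "rec_nat 0 (\<lambda>y r. r + a) b = a * b" by (induct b) auto
lemma rec_nat_power: "rec_nat (Suc 0) (\<lambda>y r. r * a) b = a ^ b" by (induct b) (simp_all add: power_commutes)

lemma total_rec_add_args: "total_rec 2 (\<lambda>xs. xs ! 0 + xs ! 1)"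
proof (rule total_rec_rec_natI[where cnt="\<lambda>xs. xs!1" and base="\<lambda>xs. xs!0" and step="\<lambda>ys. Suc (ys!1)"])
  show "total_rec (Suc (Suc 2)) (\<lambda>ys. Suc (ys ! 1))"
    by (rule total_rec_comp1[OF total_rec_cong[OF total_rec_succ] total_rec_proj]) auto
qed (auto intro: total_rec_proj simp: rec_nat_Suc_eq_add)

lemma total_rec_add [total_rec_intros]: "total_rec n f \<Longrightarrow> total_rec n g \<Longrightarrow> total_rec n (\<lambda>xs. f xs + g xs)"
  by (rule total_rec_comp2[OF total_rec_add_args])

lemma total_rec_Suc [total_rec_intros]: "total_rec n f \<Longrightarrow> total_rec n (\<lambda>xs. Suc (f xs))"
  using total_rec_add[OF _ total_rec_const, of n f 1] by simp

lemma total_rec_diff_args: "total_rec 2 (\<lambda>xs. xs ! 0 - xs ! 1)"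
proof (rule total_rec_rec_natI[where cnt="\<lambda>xs. xs!1" and base="\<lambda>xs. xs!0" and step="\<lambda>ys. ys!1 - 1"])
  have "total_rec 1 (\<lambda>xs. xs ! 0 - 1)"
    by (rule total_rec_rec_natI[where cnt="\<lambda>xs. xs!0" and base="\<lambda>_. 0" and step="\<lambda>ys. ys!0"])
       (auto intro: total_rec_intros simp: rec_nat_pred)
  then show "total_rec (Suc (Suc 2)) (\<lambda>ys. ys ! 1 - 1)"
    by (rule total_rec_comp1) (simp add: total_rec_proj)
qed (auto intro: total_rec_proj simp: rec_nat_diff)

lemma total_rec_diff [total_rec_intros]: "total_rec n f \<Longrightarrow> total_rec n g \<Longrightarrow> total_rec n (\<lambda>xs. f xs - g xs)"
  by (rule total_rec_comp2[OF total_rec_diff_args])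

lemma total_rec_mult_args: "total_rec 2 (\<lambda>xs. xs ! 0 * xs ! 1)"
  by (rule total_rec_rec_natI[where cnt="\<lambda>xs. xs!1" and base="\<lambda>_. 0" and step="\<lambda>ys. ys!1 + ys!2"])
     (auto intro!: total_rec_intros simp: rec_nat_mult)

lemma total_rec_mult [total_rec_intros]: "total_rec n f \<Longrightarrow> total_rec n g \<Longrightarrow> total_rec n (\<lambda>xs. f xs * g xs)"
  by (rule total_rec_comp2[OF total_rec_mult_args])

lemma total_rec_power_args: "total_rec 2 (\<lambda>xs. xs ! 0 ^ xs ! 1)"
  by (rule total_rec_rec_natI[where cnt="\<lambda>xs. xs!1" and base="\<lambda>_. 1" and step="\<lambda>ys. ys!1 * ys!2"])
     (auto intro!: total_rec_intros simp: rec_nat_power)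

lemma total_rec_power [total_rec_intros]: "total_rec n f \<Longrightarrow> total_rec n g \<Longrightarrow> total_rec n (\<lambda>xs. f xs ^ g xs)"
  by (rule total_rec_comp2[OF total_rec_power_args])

lemma rec_pred_less [total_rec_intros]: "total_rec n f \<Longrightarrow> total_rec n g \<Longrightarrow> rec_pred n (\<lambda>xs. f xs < g xs)"
  unfolding rec_pred_def
  by (rule total_rec_cong[where f="\<lambda>xs. 1 - (1 - (g xs - f xs))"]) (auto intro!: total_rec_intros)

lemma rec_pred_not [total_rec_intros]: "rec_pred n P \<Longrightarrow> rec_pred n (\<lambda>xs. \<not> P xs)"
  unfolding rec_pred_def
  by (rule total_rec_cong[where f="\<lambda>xs. 1 - (if P xs then 1 else 0)"]) (auto intro!: total_rec_intros)

lemma rec_pred_conj [total_rec_intros]: "rec_pred n P \<Longrightarrow> rec_pred n Q \<Longrightarrow> rec_pred n (\<lambda>xs. P xs \<and> Q xs)"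
  unfolding rec_pred_def
  by (rule total_rec_cong[where f="\<lambda>xs. (if P xs then 1 else 0) * (if Q xs then 1 else 0)"])
    (auto intro!: total_rec_intros)

lemma rec_pred_disj [total_rec_intros]: "rec_pred n P \<Longrightarrow> rec_pred n Q \<Longrightarrow> rec_pred n (\<lambda>xs. P xs \<or> Q xs)"
  using rec_pred_not[OF rec_pred_conj[OF rec_pred_not rec_pred_not]] by simp

lemma rec_pred_le [total_rec_intros]: "total_rec n f \<Longrightarrow> total_rec n g \<Longrightarrow> rec_pred n (\<lambda>xs. f xs \<le> g xs)"
  using rec_pred_not[OF rec_pred_less, of n g f] by (simp add: not_less)

lemma rec_pred_eq [total_rec_intros]: "total_rec n f \<Longrightarrow> total_rec n g \<Longrightarrow> rec_pred n (\<lambda>xs. f xs = g xs)"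
  using rec_pred_conj[OF rec_pred_le rec_pred_le, of n f g g f] by (simp add: order_eq_iff)

lemma rec_pred_const [total_rec_intros]: "rec_pred n (\<lambda>_. b)"
  unfolding rec_pred_def by (cases b) (auto intro: total_rec_const)

lemma total_rec_If [total_rec_intros]:
  "rec_pred n P \<Longrightarrow> total_rec n f \<Longrightarrow> total_rec n g \<Longrightarrow> total_rec n (\<lambda>xs. if P xs then f xs else g xs)"
  unfolding rec_pred_def
  by (rule total_rec_cong[where f="\<lambda>xs. (if P xs then 1 else 0) * f xs + (1 - (if P xs then 1 else 0)) * g xs"])
    (auto intro!: total_rec_intros)

fun bounded_min :: "nat \<Rightarrow> (nat \<Rightarrow> bool) \<Rightarrow> nat" where
  "bounded_min 0 p = 0"
| "bounded_min (Suc y) p = (if bounded_min y p < y then bounded_min y p else if p y then y else Suc y)"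

declare bounded_min.simps [simp del]

lemma bounded_min_eq: "bounded_min N p = (if \<exists>j<N. p j then LEAST j. p j else N)"
proof (induction N)
  case (Suc N)
  show ?case
  proof (cases "\<exists>j<N. p j")
    case True
    then have "(LEAST j. p j) < N" by (meson LeastI_ex Least_le order_le_less_trans)
    moreover have "\<exists>j<Suc N. p j" using True by (meson less_SucI)
    ultimately show ?thesis using True Suc by (simp add: bounded_min.simps)
  next
    case False
    then have "(\<exists>j<Suc N. p j) \<longleftrightarrow> p N" by (auto simp: less_Suc_eq)
    moreover have "p N \<Longrightarrow> (LEAST j. p j) = N"
      using False by (intro Least_equality) (auto simp: not_less[symmetric])
    ultimately show ?thesis using False Suc by (auto simp: bounded_min.simps)
  qed
qed (simp add: bounded_min.simps)

lemma bounded_min_less_iff: "bounded_min N p < N \<longleftrightarrow> (\<exists>j<N. p j)"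
proof (cases "\<exists>j<N. p j")
  case True
  then obtain j where "j < N" "p j" by blast
  then have "(LEAST j. p j) < N" by (meson Least_le order_le_less_trans)
  with True show ?thesis by (simp add: bounded_min_eq)
qed (auto simp add: bounded_min_eq)

lemma bounded_min_rec_nat: "bounded_min N p = rec_nat 0 (\<lambda>y r. if r < y then r else if p y then y else Suc y) N"
  by (induct N) (auto simp: bounded_min.simps)

lemma total_rec_bounded_min:
  assumes "rec_pred (Suc n) P" "total_rec n N"
  shows "total_rec n (\<lambda>xs. bounded_min (N xs) (\<lambda>j. P (j # xs)))"
proof (rule total_rec_rec_natI[where cnt=N and base="\<lambda>_. 0"
     and step="\<lambda>ys. if ys!1 < ys!0 then ys!1 else if P (hd ys # drop 2 ys) then ys!0 else Suc (ys!0)"])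
  show "total_rec (Suc (Suc n)) (\<lambda>ys. if ys!1 < ys!0 then ys!1 else if P (hd ys # drop 2 ys) then ys!0 else Suc (ys!0))"
    using rec_pred_drop1[OF assms(1)] by (intro total_rec_intros) simp_all
  show "bounded_min (N xs) (\<lambda>j. P (j # xs)) = rec_nat 0 (\<lambda>y r. if (y # r # xs) ! 1 < (y # r # xs) ! 0
      then (y # r # xs) ! 1 else if P (hd (y # r # xs) # drop 2 (y # r # xs)) then (y # r # xs) ! 0
      else Suc ((y # r # xs) ! 0)) (N xs)" for xs
    unfolding bounded_min_rec_nat by (rule rec_nat_fun_cong) simp
qed (use assms(2) in \<open>auto intro: total_rec_const\<close>)

lemma sum_lessThan_rec_nat: "(\<Sum>j<N. g j) = rec_nat 0 (\<lambda>y r. r + g y) N"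
  by (induct N) auto

lemma total_rec_sum:
  assumes "total_rec (Suc n) f" "total_rec n N"
  shows "total_rec n (\<lambda>xs. \<Sum>j<N xs. f (j # xs))"
proof (rule total_rec_rec_natI[where cnt=N and base="\<lambda>_. 0" and step="\<lambda>ys. ys!1 + f (hd ys # drop 2 ys)"])
  show "total_rec (Suc (Suc n)) (\<lambda>ys. ys!1 + f (hd ys # drop 2 ys))"
    using total_rec_drop1[OF assms(1)] by (intro total_rec_intros) simp_all
qed (use assms(2) in \<open>auto intro: total_rec_const simp: sum_lessThan_rec_nat\<close>)

lemma rec_pred_bex:
  assumes "rec_pred (Suc n) P" "total_rec n N"
  shows "rec_pred n (\<lambda>xs. \<exists>j<N xs. P (j # xs))"
  using rec_pred_less[OF total_rec_bounded_min[OF assms] assms(2)] by (simp add: bounded_min_less_iff)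

lemma rec_pred_ball: "rec_pred (Suc n) P \<Longrightarrow> total_rec n N \<Longrightarrow> rec_pred n (\<lambda>xs. \<forall>j<N xs. P (j # xs))"
  using rec_pred_not[OF rec_pred_bex[OF rec_pred_not]] by simp

lemma div_eq_bounded_min: "0 < d \<Longrightarrow> x div d = bounded_min (Suc x) (\<lambda>q. x < Suc q * d)"
proof -
  assume d: "0 < d"
  have ex: "x < Suc (x div d) * d"
    using div_mult_mod_eq[of x d] mod_less_divisor[OF d, of x] unfolding mult_Suc by linarith
  have "(LEAST q. x < Suc q * d) = x div d"
  proof (rule Least_equality)
    fix q assume "x < Suc q * d"
    then have "x div d < Suc q" using d by (simp add: div_less_iff_less_mult)
    then show "x div d \<le> q" by simp
  qed (rule ex)
  moreover have "\<exists>j<Suc x. x < Suc j * d" using ex le_imp_less_Suc[OF div_le_dividend] by blast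
  ultimately show ?thesis by (simp add: bounded_min_eq)
qed

lemma total_rec_div_args: "total_rec 2 (\<lambda>xs. xs ! 0 div xs ! 1)"
proof -
  have P: "rec_pred (Suc 2) (\<lambda>ys. ys!1 < Suc (ys!0) * ys!2)"
    by (intro total_rec_intros) simp_all
  have "total_rec 2 (\<lambda>xs. if xs!1 = 0 then 0 else bounded_min (Suc (xs!0)) (\<lambda>j. (j # xs)!1 < Suc ((j # xs)!0) * (j#xs)!2))"
    by (intro total_rec_intros total_rec_bounded_min[OF P]) simp_all
  then show ?thesis by (rule total_rec_cong) (auto simp: div_eq_bounded_min)
qed

lemma total_rec_div [total_rec_intros]: "total_rec n f \<Longrightarrow> total_rec n g \<Longrightarrow> total_rec n (\<lambda>xs. f xs div g xs)"
  by (rule total_rec_comp2[OF total_rec_div_args])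

lemma total_rec_mod [total_rec_intros]:
  assumes "total_rec n f" "total_rec n g"
  shows "total_rec n (\<lambda>xs. f xs mod g xs)"
proof -
  have "total_rec n (\<lambda>xs. f xs - g xs * (f xs div g xs))" using assms by (intro total_rec_intros)
  then show ?thesis by (rule total_rec_cong) (simp add: minus_mult_div_eq_mod)
qed

lemma partrec_Least:
  assumes "total_rec (Suc n) p"
  shows "partrec n (\<lambda>xs. if \<exists>y. p (y # xs) = 0 then Some (LEAST y. p (y # xs) = 0) else None)"
proof -
  have "partrec n (mu (\<lambda>ys. Some (p ys)))" using assms unfolding total_rec_def by (rule partrec.minim)
  then show ?thesis by (rule partrec.ext) (simp add: mu_def)
qed

lemma partrec_comp_total:
  assumes h: "total_rec (Suc n) h" and q: "partrec n q"
  shows "partrec n (\<lambda>xs. map_option (\<lambda>v. h (v # xs)) (q xs))"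
proof -
  define fs where "fs = (\<lambda>i::nat. if i = 0 then q else (\<lambda>xs. Some (xs ! (i - 1))))"
  have "partrec n (\<lambda>xs. if \<forall>i<Suc n. fs i xs \<noteq> None
      then (\<lambda>ys. Some (h ys)) (map (\<lambda>i. the (fs i xs)) [0..<Suc n]) else None)"
    using h q unfolding total_rec_def fs_def
    by (intro partrec.comp) (auto intro: partrec.proj)
  then show ?thesis
  proof (rule partrec.ext)
    fix xs :: "nat list" assume len: "length xs = n"
    have "map (\<lambda>i. the (fs i xs)) [0..<Suc n] = the (q xs) # xs"
      using len by (intro nth_equalityI) (auto simp: fs_def nth_Cons' simp del: upt_Suc)
    moreover have "(\<forall>i<Suc n. fs i xs \<noteq> None) \<longleftrightarrow> q xs \<noteq> None"
      unfolding fs_def by (auto simp del: upt_Suc)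
    ultimately show "map_option (\<lambda>v. h (v # xs)) (q xs) = (if \<forall>i<Suc n. fs i xs \<noteq> None
        then (\<lambda>ys. Some (h ys)) (map (\<lambda>i. the (fs i xs)) [0..<Suc n]) else None)"
      by (cases "q xs") auto
  qed
qed

lemma total_rec_comp_computable1:
  assumes f: "computable1 f" and g: "total_rec n g" and defined: "\<And>xs. length xs = n \<Longrightarrow> f (g xs) \<noteq> None"
  shows "total_rec n (\<lambda>xs. the (f (g xs)))"
proof -
  have "partrec n (\<lambda>xs. f (g xs))"
    using partrec.comp[OF f[unfolded computable1_def], where fs="\<lambda>i xs. Some (g xs)" and n=n] g
    unfolding total_rec_def by simp
  then show ?thesis unfolding total_rec_def by (rule partrec.ext) (use defined in auto)
qed

lemma total_rec_of_computable1: "computable1 (\<lambda>k. Some (h k)) \<Longrightarrow> total_rec 1 (\<lambda>xs. h (xs ! 0))"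
  unfolding computable1_def total_rec_def by (erule partrec.ext) simp

lemma computable1_of_partrec: "partrec 1 F \<Longrightarrow> (\<And>i. F [i] = g i) \<Longrightarrow> computable1 g"
  unfolding computable1_def
  by (erule partrec.ext) (metis One_nat_def length_0_conv length_Suc_conv list.sel(1))

lemma computable1_Least:
  assumes "rec_pred 2 (\<lambda>xs. P (xs ! 0) (xs ! 1))" "total_rec 2 (\<lambda>xs. h (xs ! 0) (xs ! 1))"
  shows "computable1 (\<lambda>i. if \<exists>y. P y i then Some (h (LEAST y. P y i) i) else None)"
proof -
  have "total_rec (Suc 1) (\<lambda>ys. if P (ys ! 0) (ys ! 1) then 0 else 1)"
    using assms(1) by (intro total_rec_intros) (simp add: numeral_2_eq_2)
  from partrec_comp_total[OF assms(2)[simplified numeral_2_eq_2 One_nat_def[symmetric]] partrec_Least[OF this]]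
  show ?thesis
  proof (rule computable1_of_partrec)
    fix i
    have "(\<exists>y. (if P y i then 0 else 1::nat) = 0) \<longleftrightarrow> (\<exists>y. P y i)" by auto
    moreover have "(LEAST y. (if P y i then 0 else 1::nat) = 0) = (LEAST y. P y i)"
      by (rule arg_cong[where f=Least]) (auto intro!: ext)
    ultimately show "map_option (\<lambda>v. h ((v # [i]) ! 0) ((v # [i]) ! 1))
       (if \<exists>y. (if P ((y # [i]) ! 0) ((y # [i]) ! 1) then 0 else 1::nat) = 0
        then Some (LEAST y. (if P ((y # [i]) ! 0) ((y # [i]) ! 1) then 0 else 1::nat) = 0) else None)
      = (if \<exists>y. P y i then Some (h (LEAST y. P y i) i) else None)"
      by simp
  qed
qed


section \<open>Codes of pairs, lists and digit strings\<close>

lemma triangle_rec_nat: "triangle n = rec_nat 0 (\<lambda>y r. r + Suc y) n"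
  by (induct n) auto

lemma total_rec_triangle_args: "total_rec 1 (\<lambda>xs. triangle (xs ! 0))"
  by (rule total_rec_rec_natI[where cnt="\<lambda>xs. xs!0" and base="\<lambda>_. 0" and step="\<lambda>ys. ys!1 + Suc (ys!0)"])
    (auto intro!: total_rec_intros rec_nat_fun_cong simp: triangle_rec_nat)

lemma total_rec_triangle [total_rec_intros]: "total_rec n f \<Longrightarrow> total_rec n (\<lambda>xs. triangle (f xs))"
  by (rule total_rec_comp1[OF total_rec_triangle_args])

lemma total_rec_prod_encode [total_rec_intros]:
  assumes "total_rec n f" "total_rec n g"
  shows "total_rec n (\<lambda>xs. prod_encode (f xs, g xs))"
proof -
  have "total_rec n (\<lambda>xs. triangle (f xs + g xs) + f xs)" using assms by (intro total_rec_intros)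
  then show ?thesis by (rule total_rec_cong) (simp add: prod_encode_def)
qed

lemma triangle_Suc_le: "k < j \<Longrightarrow> triangle (Suc k) \<le> triangle j"
proof (induction j)
  case (Suc j) then show ?case by (cases "k = j") auto
qed simp

lemma le_triangle: "n \<le> triangle n"
  by (induct n) auto

definition triangle_root :: "nat \<Rightarrow> nat" where
  "triangle_root m = bounded_min (Suc m) (\<lambda>k. m < triangle (Suc k))"

lemma triangle_root_prod_decode: "triangle_root m = fst (prod_decode m) + snd (prod_decode m)"
proof -
  obtain a b where ab: "prod_decode m = (a, b)" by (cases "prod_decode m")
  have m: "m = triangle (a + b) + a"
    using prod_decode_inverse[of m] ab by (simp add: prod_encode_def)
  have "(LEAST k. m < triangle (Suc k)) = a + b"
  proof (rule Least_equality)
    fix k assume k: "m < triangle (Suc k)"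
    show "a + b \<le> k"
    proof (rule ccontr)
      assume "\<not> a + b \<le> k"
      then have "triangle (Suc k) \<le> triangle (a + b)" by (intro triangle_Suc_le) simp
      with m k show False by simp
    qed
  qed (use m in simp)
  moreover have "\<exists>j<Suc m. m < triangle (Suc j)"
    using m le_triangle[of "a + b"] by (intro exI[of _ "a + b"]) simp
  ultimately show ?thesis using ab unfolding triangle_root_def bounded_min_eq by simp
qed

lemma total_rec_triangle_root_args: "total_rec 1 (\<lambda>xs. triangle_root (xs ! 0))"
proof -
  have "rec_pred (Suc 1) (\<lambda>ys. ys!1 < triangle (Suc (ys!0)))"
    by (intro total_rec_intros) simp_all
  then have "total_rec 1 (\<lambda>xs. bounded_min (Suc (xs!0)) (\<lambda>j. (j # xs)!1 < triangle (Suc ((j # xs)!0))))"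
    by (rule total_rec_bounded_min) (intro total_rec_intros, simp)
  then show ?thesis by (rule total_rec_cong) (simp add: triangle_root_def)
qed

lemma total_rec_triangle_root [total_rec_intros]: "total_rec n f \<Longrightarrow> total_rec n (\<lambda>xs. triangle_root (f xs))"
  by (rule total_rec_comp1[OF total_rec_triangle_root_args])

lemma fst_prod_decode: "fst (prod_decode m) = m - triangle (triangle_root m)"
proof -
  obtain a b where ab: "prod_decode m = (a, b)" by (cases "prod_decode m")
  then have "m = triangle (a + b) + a"
    using prod_decode_inverse[of m] by (simp add: prod_encode_def)
  then show ?thesis using ab by (simp add: triangle_root_prod_decode)
qed

lemma snd_prod_decode: "snd (prod_decode m) = triangle_root m - (m - triangle (triangle_root m))"
  using triangle_root_prod_decode[of m] fst_prod_decode[of m] by simp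

lemma total_rec_fst_prod_decode [total_rec_intros]:
  "total_rec n f \<Longrightarrow> total_rec n (\<lambda>xs. fst (prod_decode (f xs)))"
  unfolding fst_prod_decode by (intro total_rec_intros)

lemma total_rec_snd_prod_decode [total_rec_intros]:
  "total_rec n f \<Longrightarrow> total_rec n (\<lambda>xs. snd (prod_decode (f xs)))"
  unfolding snd_prod_decode by (intro total_rec_intros)

definition hd_code :: "nat \<Rightarrow> nat" where
  "hd_code L = fst (prod_decode (L - 1))"

definition tl_code :: "nat \<Rightarrow> nat" where
  "tl_code L = snd (prod_decode (L - 1))"

lemma hd_code_list_encode: "xs \<noteq> [] \<Longrightarrow> hd_code (list_encode xs) = hd xs"
  by (cases xs) (auto simp: hd_code_def)

lemma tl_code_list_encode: "tl_code (list_encode xs) = list_encode (tl xs)"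
proof (cases xs)
  case Nil then show ?thesis by (simp add: tl_code_def prod_decode_def prod_decode_aux.simps)
qed (simp add: tl_code_def)

lemma total_rec_hd_code [total_rec_intros]: "total_rec n f \<Longrightarrow> total_rec n (\<lambda>xs. hd_code (f xs))"
  unfolding hd_code_def by (intro total_rec_intros)

lemma total_rec_tl_code [total_rec_intros]: "total_rec n f \<Longrightarrow> total_rec n (\<lambda>xs. tl_code (f xs))"
  unfolding tl_code_def by (intro total_rec_intros)

definition drop_code :: "nat \<Rightarrow> nat \<Rightarrow> nat" where
  "drop_code i L = rec_nat L (\<lambda>y r. tl_code r) i"

lemma drop_code_list_encode: "drop_code i (list_encode xs) = list_encode (drop i xs)"
  by (induct i) (auto simp: drop_code_def tl_code_list_encode drop_Suc tl_drop)

lemma total_rec_drop_code_args: "total_rec 2 (\<lambda>xs. drop_code (xs ! 0) (xs ! 1))"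
  by (rule total_rec_rec_natI[where cnt="\<lambda>xs. xs!0" and base="\<lambda>xs. xs!1" and step="\<lambda>ys. tl_code (ys!1)"])
    (auto intro!: total_rec_intros simp: drop_code_def)

lemma total_rec_drop_code [total_rec_intros]:
  "total_rec n f \<Longrightarrow> total_rec n g \<Longrightarrow> total_rec n (\<lambda>xs. drop_code (f xs) (g xs))"
  by (rule total_rec_comp2[OF total_rec_drop_code_args])

lemma length_le_list_encode: "length xs \<le> list_encode xs"
proof (induct xs)
  case (Cons x xs)
  then show ?case using le_prod_encode_2[of "list_encode xs" x] by simp
qed simp

lemma list_encode_eq_0_iff: "list_encode xs = 0 \<longleftrightarrow> xs = []"
  by (cases xs) auto

definition length_code :: "nat \<Rightarrow> nat" where
  "length_code L = (\<Sum>j<L. if drop_code j L = 0 then 0 else 1)"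

lemma length_code_list_encode [simp]: "length_code (list_encode xs) = length xs"
proof -
  have "(drop_code j (list_encode xs) = 0) \<longleftrightarrow> \<not> j < length xs" for j
    by (auto simp: drop_code_list_encode list_encode_eq_0_iff)
  then have "length_code (list_encode xs) = card ({j. j < length xs} \<inter> {j. j < list_encode xs})"
    unfolding length_code_def by (simp add: sum.If_cases Int_def conj_commute)
  also have "{j. j < length xs} \<inter> {j. j < list_encode xs} = {..<length xs}"
    using length_le_list_encode[of xs] by auto
  finally show ?thesis by simp
qed

lemma total_rec_length_code_args: "total_rec 1 (\<lambda>xs. length_code (xs ! 0))"
proof -
  have "total_rec 1 (\<lambda>xs. \<Sum>j<xs!0. (\<lambda>ys. if drop_code (ys!0) (ys!1) = 0 then 0 else 1) (j # xs))"
    by (rule total_rec_sum; intro total_rec_intros; simp)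
  then show ?thesis by (rule total_rec_cong) (simp add: length_code_def)
qed

lemma total_rec_length_code [total_rec_intros]: "total_rec n f \<Longrightarrow> total_rec n (\<lambda>xs. length_code (f xs))"
  by (rule total_rec_comp1[OF total_rec_length_code_args])

definition nth_code :: "nat \<Rightarrow> nat \<Rightarrow> nat" where
  "nth_code L i = hd_code (drop_code i L)"

lemma nth_code_list_encode: "i < length xs \<Longrightarrow> nth_code (list_encode xs) i = xs ! i"
  by (simp add: nth_code_def drop_code_list_encode hd_code_list_encode hd_drop_conv_nth)

lemma total_rec_nth_code [total_rec_intros]:
  "total_rec n f \<Longrightarrow> total_rec n g \<Longrightarrow> total_rec n (\<lambda>xs. nth_code (f xs) (g xs))"
  unfolding nth_code_def by (intro total_rec_intros)

definition append_code :: "nat \<Rightarrow> nat \<Rightarrow> nat" where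
  "append_code A B = rec_nat B (\<lambda>i r. Suc (prod_encode (nth_code A (length_code A - Suc i), r))) (length_code A)"

lemma append_code_list_encode [simp]:
  "append_code (list_encode xs) (list_encode ys) = list_encode (xs @ ys)"
proof -
  have "rec_nat (list_encode ys) (\<lambda>i r. Suc (prod_encode (nth_code (list_encode xs) (length xs - Suc i), r))) i
     = list_encode (drop (length xs - i) xs @ ys)" if "i \<le> length xs" for i
    using that
  proof (induct i)
    case (Suc i)
    then have i: "length xs - Suc i < length xs" by simp
    have "drop (length xs - Suc i) xs = xs ! (length xs - Suc i) # drop (length xs - i) xs"
      using Cons_nth_drop_Suc[OF i] Suc.prems by (simp add: Suc_diff_Suc)
    then show ?case using Suc by (simp add: nth_code_list_encode[OF i])
  qed simp
  from this[of "length xs"] show ?thesis unfolding append_code_def by simp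
qed

lemma total_rec_append_code_args: "total_rec 2 (\<lambda>xs. append_code (xs!0) (xs!1))"
  by (rule total_rec_rec_natI[where cnt="\<lambda>xs. length_code (xs!0)" and base="\<lambda>xs. xs!1"
          and step="\<lambda>ys. Suc (prod_encode (nth_code (ys!2) (length_code (ys!2) - Suc (ys!0)), ys!1))"])
    (auto intro!: total_rec_intros simp: append_code_def)

lemma total_rec_append_code [total_rec_intros]:
  "total_rec n f \<Longrightarrow> total_rec n g \<Longrightarrow> total_rec n (\<lambda>xs. append_code (f xs) (g xs))"
  by (rule total_rec_comp2[OF total_rec_append_code_args])

fun digits :: "nat \<Rightarrow> nat \<Rightarrow> nat \<Rightarrow> nat list" where
  "digits D 0 v = []"
| "digits D (Suc l) v = digits D l (v div D) @ [v mod D]"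

lemma digits_Suc_Cons: "digits D (Suc l) v = (v div D ^ l) mod D # digits D l v"
proof (induct l arbitrary: v)
  case (Suc l)
  have "digits D (Suc (Suc l)) v = digits D (Suc l) (v div D) @ [v mod D]" by simp
  also have "\<dots> = (((v div D) div D ^ l) mod D # digits D l (v div D)) @ [v mod D]" by (simp only: Suc)
  also have "\<dots> = (v div D ^ Suc l) mod D # digits D (Suc l) v" by (simp add: div_mult2_eq)
  finally show ?case .
qed simp

lemma length_digits [simp]: "length (digits D l v) = l"
  by (induct l arbitrary: v) auto

lemma set_digits: "0 < D \<Longrightarrow> set (digits D l v) \<subseteq> {..<D}"
  by (induct l arbitrary: v) auto

lemma digits_add: "digits D (k + m) b = digits D k (b div D ^ m) @ digits D m b"
proof (induct m arbitrary: b)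
  case (Suc m)
  have "digits D (k + Suc m) b = digits D k (b div D div D ^ m) @ digits D m (b div D) @ [b mod D]"
    by (simp add: Suc)
  also have "\<dots> = digits D k (b div D ^ Suc m) @ digits D (Suc m) b" by (simp add: div_mult2_eq)
  finally show ?case .
qed simp

lemma digits_inj: "0 < D \<Longrightarrow> v < D ^ l \<Longrightarrow> w < D ^ l \<Longrightarrow> digits D l v = digits D l w \<Longrightarrow> v = w"
proof (induct l arbitrary: v w)
  case (Suc l)
  then have m: "v mod D = w mod D" and d: "digits D l (v div D) = digits D l (w div D)" by auto
  have "v div D < D ^ l" "w div D < D ^ l" using Suc.prems
    by (simp_all add: less_mult_imp_div_less mult.commute)
  with Suc.hyps[OF Suc.prems(1) _ _ d] have "v div D = w div D" by simp
  with m show ?case by (metis div_mult_mod_eq)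
qed simp

definition digits_code :: "nat \<Rightarrow> nat \<Rightarrow> nat \<Rightarrow> nat" where
  "digits_code D l v = rec_nat 0 (\<lambda>i r. Suc (prod_encode ((v div D ^ i) mod D, r))) l"

lemma digits_code_eq: "digits_code D l v = list_encode (digits D l v)"
  by (induct l) (auto simp: digits_code_def digits_Suc_Cons simp del: digits.simps(2))

lemma total_rec_digits_code_args: "total_rec 3 (\<lambda>xs. digits_code (xs!0) (xs!1) (xs!2))"
  by (rule total_rec_rec_natI[where cnt="\<lambda>xs. xs!1" and base="\<lambda>_. 0"
          and step="\<lambda>ys. Suc (prod_encode ((ys!4 div ys!2 ^ ys!0) mod ys!2, ys!1))"])
    (auto intro!: total_rec_intros simp: digits_code_def)

lemma total_rec_digits_code [total_rec_intros]:
  "total_rec n f \<Longrightarrow> total_rec n g \<Longrightarrow> total_rec n h \<Longrightarrow> total_rec n (\<lambda>xs. digits_code (f xs) (g xs) (h xs))"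
  by (rule total_rec_comp3[OF total_rec_digits_code_args])

lemma rec_pred_mem_set_decode [total_rec_intros]:
  assumes "total_rec n f" "total_rec n g"
  shows "rec_pred n (\<lambda>xs. g xs \<in> set_decode (f xs))"
proof -
  have "rec_pred n (\<lambda>xs. (f xs div 2 ^ g xs) mod 2 = 1)" using assms by (intro total_rec_intros)
  then show ?thesis by (simp add: set_decode_def odd_iff_mod_2_eq_one)
qed


section \<open>The D-ary tree\<close>

text \<open>Node (k, a) with a < D ^ k stands for the codeword of the k base-D digits of a, so that
  the codewords of incomparable nodes are not prefixes of each other.\<close>

definition tree_ancestor :: "nat \<Rightarrow> nat \<times> nat \<Rightarrow> nat \<times> nat \<Rightarrow> bool" where
  "tree_ancestor D p q \<longleftrightarrow> fst p \<le> fst q \<and> snd q div D ^ (fst q - fst p) = snd p"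

definition tree_incomparable :: "nat \<Rightarrow> nat \<times> nat \<Rightarrow> nat \<times> nat \<Rightarrow> bool" where
  "tree_incomparable D p q \<longleftrightarrow> \<not> tree_ancestor D p q \<and> \<not> tree_ancestor D q p"

definition tree_antichain :: "nat \<Rightarrow> (nat \<times> nat) set \<Rightarrow> bool" where
  "tree_antichain D N \<longleftrightarrow> (\<forall>p\<in>N. \<forall>q\<in>N. p \<noteq> q \<longrightarrow> tree_incomparable D p q)"

lemma div_power_div_power:
  assumes "k \<le> j" "j \<le> i"
  shows "c div (D::nat) ^ (i - j) div D ^ (j - k) = c div D ^ (i - k)"
proof -
  have "D ^ (i - k) = D ^ (i - j) * D ^ (j - k)"
    using assms by (simp add: power_add[symmetric])
  then show ?thesis by (simp add: div_mult2_eq)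
qed

lemma tree_ancestor_trans: "tree_ancestor D p q \<Longrightarrow> tree_ancestor D q r \<Longrightarrow> tree_ancestor D p r"
  unfolding tree_ancestor_def using div_power_div_power[of "fst p" "fst q" "fst r" "snd r" D] by auto

lemma tree_ancestors_linear:
  assumes "tree_ancestor D p r" "tree_ancestor D q r"
  shows "tree_ancestor D p q \<or> tree_ancestor D q p"
proof -
  have *: "tree_ancestor D p q" if "fst p \<le> fst q" "tree_ancestor D p r" "tree_ancestor D q r" for p q
    using that div_power_div_power[of "fst p" "fst q" "fst r" "snd r" D] unfolding tree_ancestor_def by auto
  show ?thesis using *[of p q] *[of q p] assms by (cases "fst p \<le> fst q") auto
qed

lemma tree_ancestor_extend:
  assumes "t < D ^ m"
  shows "tree_ancestor D (k, a) (k + m, a * D ^ m + t)"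
proof -
  have "(t + a * D ^ m) div D ^ m = a + t div D ^ m"
    by (intro div_mult_self1) (use assms in linarith)
  with assms show ?thesis unfolding tree_ancestor_def by (simp add: add.commute)
qed

lemma tree_incomparable_sym: "tree_incomparable D p q = tree_incomparable D q p"
  unfolding tree_incomparable_def by auto

lemma tree_incomparable_irrefl: "\<not> tree_incomparable D p p"
  unfolding tree_incomparable_def tree_ancestor_def by simp

lemma tree_incomparable_descendant:
  "tree_incomparable D p q \<Longrightarrow> tree_ancestor D q r \<Longrightarrow> tree_incomparable D p r"
  unfolding tree_incomparable_def using tree_ancestor_trans tree_ancestors_linear by blast

lemma tree_antichain_replace:
  assumes N: "tree_antichain D N" "r \<in> N" and G: "tree_antichain D G" "\<forall>q\<in>G. tree_ancestor D r q"
  shows "tree_antichain D ((N - {r}) \<union> G)" and "(N - {r}) \<inter> G = {}"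
proof -
  have NG: "tree_incomparable D p q" if "p \<in> N - {r}" "q \<in> G" for p q
    using N G that tree_incomparable_descendant unfolding tree_antichain_def by blast
  then show "tree_antichain D ((N - {r}) \<union> G)"
    using N G unfolding tree_antichain_def by (metis Un_iff Diff_iff tree_incomparable_sym)
  show "(N - {r}) \<inter> G = {}" using NG tree_incomparable_irrefl by blast
qed

lemma prefix_digits_imp_tree_ancestor:
  assumes D: "0 < D" and a: "a < D ^ k" and b: "b < D ^ j"
    and p: "prefix (digits D k a) (digits D j b)"
  shows "tree_ancestor D (k, a) (j, b)"
proof -
  have kj: "k \<le> j" using prefix_length_le[OF p] by simp
  then have e: "digits D j b = digits D k (b div D ^ (j - k)) @ digits D (j - k) b"
    using digits_add[of D k "j - k" b] by simp
  from p obtain zs where "digits D j b = digits D k a @ zs" by (auto simp: prefix_def)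
  with e have "digits D k a = digits D k (b div D ^ (j - k))"
    by (metis append_eq_append_conv length_digits)
  moreover have "b div D ^ (j - k) < D ^ k"
    using b D kj by (simp add: div_less_iff_less_mult power_add[symmetric])
  ultimately have "a = b div D ^ (j - k)" using digits_inj[OF D a] by blast
  then show ?thesis using kj unfolding tree_ancestor_def by simp
qed

lemma tree_incomparable_not_prefix:
  "0 < D \<Longrightarrow> snd p < D ^ fst p \<Longrightarrow> snd q < D ^ fst q \<Longrightarrow> tree_incomparable D p q \<Longrightarrow>
   \<not> prefix (digits D (fst p) (snd p)) (digits D (fst q) (snd q))"
  using prefix_digits_imp_tree_ancestor[of D "snd p" "fst p" "snd q" "fst q"]
  unfolding tree_incomparable_def by auto

definition level_weight :: "nat \<Rightarrow> nat \<Rightarrow> real" where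
  "level_weight D k = (1 / real D) ^ k"

lemma level_weight_pos: "0 < D \<Longrightarrow> 0 < level_weight D k"
  by (simp add: level_weight_def)

lemma level_weight_Suc: "0 < D \<Longrightarrow> real D * level_weight D (Suc n) = level_weight D n"
  by (simp add: level_weight_def)

lemma level_weight_geometric:
  "0 < D \<Longrightarrow> (\<Sum>j<m. (real D - 1) * level_weight D (k + 1 + j)) + level_weight D (k + m) = level_weight D k"
proof (induct m)
  case (Suc m)
  have "(\<Sum>j<Suc m. (real D - 1) * level_weight D (k + 1 + j)) + level_weight D (k + Suc m)
     = (\<Sum>j<m. (real D - 1) * level_weight D (k + 1 + j)) + real D * level_weight D (Suc (k + m))"
    by (simp add: algebra_simps)
  also have "\<dots> = level_weight D k" using Suc by (simp add: level_weight_Suc)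
  finally show ?case .
qed simp

lemma sum_level_weight_by_level:
  assumes "finite F"
  shows "(\<Sum>p\<in>F. level_weight D (fst p)) = (\<Sum>k\<in>fst ` F. real (card {a. (k, a) \<in> F}) * level_weight D k)"
proof -
  have "(\<Sum>p\<in>F. level_weight D (fst p)) = (\<Sum>k\<in>fst ` F. \<Sum>p\<in>{p\<in>F. fst p = k}. level_weight D (fst p))"
    by (rule sum.image_gen[OF assms])
  also have "\<dots> = (\<Sum>k\<in>fst ` F. real (card {p\<in>F. fst p = k}) * level_weight D k)"
    by (intro sum.cong) auto
  also have "\<dots> = (\<Sum>k\<in>fst ` F. real (card {a. (k, a) \<in> F}) * level_weight D k)"
  proof (intro sum.cong refl arg_cong2[where f="(*)"] arg_cong[where f=real])
    fix k
    have "{p\<in>F. fst p = k} = Pair k ` {a. (k, a) \<in> F}" by force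
    then show "card {p\<in>F. fst p = k} = card {a. (k, a) \<in> F}"
      by (simp add: card_image inj_on_def)
  qed
  finally show ?thesis .
qed


section \<open>Kraft-Chaitin allocation\<close>

text \<open>Splitting node (k, a) down to level k + m yields its leftmost descendant on level k + m,
  which is allocated, and the right siblings of the nodes on the path leading to it, which
  become free (split_nodes).\<close>

definition split_nodes :: "nat \<Rightarrow> nat \<Rightarrow> nat \<Rightarrow> nat \<Rightarrow> (nat \<times> nat) set" where
  "split_nodes D k a m = (\<lambda>(j, t). (k + 1 + j, a * D ^ (j + 1) + (t + 1))) ` ({..<m} \<times> {..<D - 1})"

lemma finite_split_nodes [simp]: "finite (split_nodes D k a m)"
  unfolding split_nodes_def by simp

lemma split_nodes_level: "(k', b) \<in> split_nodes D k a m \<Longrightarrow> k < k' \<and> k' \<le> k + m"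
  unfolding split_nodes_def by auto

lemma card_split_nodes_level: "card {b. (k', b) \<in> split_nodes D k a m} \<le> D - 1"
proof -
  have "{b. (k', b) \<in> split_nodes D k a m} \<subseteq> (\<lambda>t. a * D ^ (k' - k) + (t + 1)) ` {..<D - 1}"
    unfolding split_nodes_def by force
  then have "card {b. (k', b) \<in> split_nodes D k a m} \<le> card ((\<lambda>t. a * D ^ (k' - k) + (t + 1)) ` {..<D - 1})"
    by (intro card_mono) auto
  also have "\<dots> \<le> D - 1" using card_image_le[of "{..<D - 1}"] by simp
  finally show ?thesis .
qed

lemma sum_level_weight_split_nodes:
  assumes "0 < D"
  shows "(\<Sum>p\<in>split_nodes D k a m. level_weight D (fst p)) = (\<Sum>j<m. (real D - 1) * level_weight D (k + 1 + j))"
proof -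
  have inj: "inj_on (\<lambda>(j, t). (k + 1 + j, a * D ^ (j + 1) + (t + 1))) ({..<m} \<times> {..<D - 1})"
    by (auto simp: inj_on_def)
  have "(\<Sum>p\<in>split_nodes D k a m. level_weight D (fst p))
      = (\<Sum>(j, t)\<in>{..<m} \<times> {..<D - 1}. level_weight D (k + 1 + j))"
    unfolding split_nodes_def by (subst sum.reindex[OF inj]) (auto intro!: sum.cong)
  also have "\<dots> = (\<Sum>j<m. \<Sum>t<D - 1. level_weight D (k + 1 + j))"
    by (rule sum.cartesian_product[symmetric])
  also have "\<dots> = (\<Sum>j<m. (real D - 1) * level_weight D (k + 1 + j))"
    using assms by (simp add: of_nat_diff)
  finally show ?thesis .
qed

definition split_family :: "nat \<Rightarrow> nat \<Rightarrow> nat \<Rightarrow> nat \<Rightarrow> (nat \<times> nat) set" where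
  "split_family D k a m = insert (k + m, a * D ^ m) (split_nodes D k a m)"

lemma split_family_offset:
  assumes D: "2 \<le> D" and p: "p \<in> split_family D k a m"
  obtains mm u where "p = (k + mm, a * D ^ mm + u)" "u < D" "u < D ^ mm" "mm \<le> m" "u = 0 \<Longrightarrow> mm = m"
proof (cases "p = (k + m, a * D ^ m)")
  case False
  then obtain j t where jt: "p = (k + (j + 1), a * D ^ (j + 1) + (t + 1))" "j < m" "t < D - 1"
    using p unfolding split_family_def split_nodes_def by auto
  have "D \<le> D ^ (j + 1)" using power_increasing[of 1 "j + 1" D] D by simp
  then have "t + 1 < D ^ (j + 1)" using jt(3) by linarith
  then show ?thesis using jt by (intro that[of "j + 1" "t + 1"]) auto
qed (use D in \<open>auto simp: split_family_def\<close>)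

lemma tree_ancestor_offsets:
  assumes D: "0 < D" and "tree_ancestor D (k + mm, a * D ^ mm + u) (k + mm', a * D ^ mm' + u')"
  shows "mm \<le> mm' \<and> u' div D ^ (mm' - mm) = u"
proof -
  have le: "mm \<le> mm'" using assms(2) unfolding tree_ancestor_def by simp
  have eq: "a * D ^ mm' = (a * D ^ mm) * D ^ (mm' - mm)" using le by (simp add: power_add[symmetric])
  have "(a * D ^ mm' + u') div D ^ (mm' - mm) = (u' + (a * D ^ mm) * D ^ (mm' - mm)) div D ^ (mm' - mm)"
    by (subst eq) (simp add: add.commute)
  also have "\<dots> = a * D ^ mm + u' div D ^ (mm' - mm)"
    using D by (subst div_mult_self1) auto
  finally have "(a * D ^ mm' + u') div D ^ (mm' - mm) = a * D ^ mm + u' div D ^ (mm' - mm)" .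
  then show ?thesis using assms(2) le unfolding tree_ancestor_def by simp
qed

lemma split_family_valid:
  assumes D: "2 \<le> D" and a: "a < D ^ k" and p: "p \<in> split_family D k a m"
  shows "snd p < D ^ fst p"
proof -
  obtain mm u where p: "p = (k + mm, a * D ^ mm + u)" "u < D ^ mm"
    using split_family_offset[OF D p] by metis
  have "a * D ^ mm + u < (a + 1) * D ^ mm" using p by simp
  also have "\<dots> \<le> D ^ k * D ^ mm" using a by (intro mult_right_mono) auto
  finally show ?thesis using p by (simp add: power_add)
qed

lemma split_family_descendant:
  "2 \<le> D \<Longrightarrow> p \<in> split_family D k a m \<Longrightarrow> tree_ancestor D (k, a) p"
  using split_family_offset tree_ancestor_extend by metis

lemma tree_antichain_split_family:
  assumes D: "2 \<le> D"
  shows "tree_antichain D (split_family D k a m)"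
proof -
  have False if pN: "p \<in> split_family D k a m" and qN: "q \<in> split_family D k a m"
    and pq: "p \<noteq> q" and anc: "tree_ancestor D p q" for p q
  proof -
    obtain mm u where p: "p = (k + mm, a * D ^ mm + u)" "u < D" "mm \<le> m" "u = 0 \<Longrightarrow> mm = m"
      using split_family_offset[OF D pN] by metis
    obtain mm' u' where q: "q = (k + mm', a * D ^ mm' + u')" "u' < D" "mm' \<le> m"
      using split_family_offset[OF D qN] by metis
    have h: "mm \<le> mm' \<and> u' div D ^ (mm' - mm) = u"
      using tree_ancestor_offsets[of D k mm a u mm' u'] D anc p q by simp
    then have "mm < mm'" using p q pq by (cases "mm = mm'") auto
    then have "D ^ 1 \<le> D ^ (mm' - mm)" using D by (intro power_increasing) auto
    then have "u = 0" using h q(2) by simp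
    then show False using p(4) q(3) \<open>mm < mm'\<close> by simp
  qed
  then show ?thesis unfolding tree_antichain_def tree_incomparable_def by metis
qed

lemma card_level_split_replace:
  assumes fin: "finite F" and card: "\<forall>k. card {a. (k, a) \<in> F} \<le> D - 1"
    and gap: "\<forall>k'. k < k' \<longrightarrow> k' \<le> k + m \<longrightarrow> (\<forall>a'. (k', a') \<notin> F)"
  shows "card {b. (k', b) \<in> (F - {(k, a)}) \<union> split_nodes D k a m} \<le> D - 1"
proof (cases "k < k' \<and> k' \<le> k + m")
  case True
  then have "{b. (k', b) \<in> (F - {(k, a)}) \<union> split_nodes D k a m} = {b. (k', b) \<in> split_nodes D k a m}"
    using gap by auto
  then show ?thesis using card_split_nodes_level by simp
next
  case False
  then have "{b. (k', b) \<in> (F - {(k, a)}) \<union> split_nodes D k a m} \<subseteq> {b. (k', b) \<in> F}"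
    using split_nodes_level by fastforce
  moreover have "finite {b. (k', b) \<in> F}"
    using finite_subset[of "{b. (k', b) \<in> F}" "snd ` F"] fin by force
  ultimately show ?thesis using card[rule_format, of k'] by (meson card_mono le_trans)
qed

lemma sum_level_weight_split_replace:
  assumes D: "0 < D" and fin: "finite F" and ka: "(k, a) \<in> F" and new: "split_nodes D k a m \<inter> F = {}"
  shows "(\<Sum>p\<in>(F - {(k, a)}) \<union> split_nodes D k a m. level_weight D (fst p)) + level_weight D (k + m)
    = (\<Sum>p\<in>F. level_weight D (fst p))"
proof -
  have "(F - {(k, a)}) \<inter> split_nodes D k a m = {}" using new by blast
  then have "(\<Sum>p\<in>(F - {(k, a)}) \<union> split_nodes D k a m. level_weight D (fst p))
      = (\<Sum>p\<in>F - {(k, a)}. level_weight D (fst p)) + (\<Sum>p\<in>split_nodes D k a m. level_weight D (fst p))"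
    using fin by (intro sum.union_disjoint) auto
  then show ?thesis
    using fin ka sum_level_weight_split_nodes[OF D, of k a m] level_weight_geometric[OF D, of k m]
    by (simp add: sum_diff1)
qed

text \<open>F is the set of free nodes and A the set of allocated ones. As at most D - 1 free nodes lie on
  each level, the free weight strictly below level l is less than the weight of one node of level l;
  hence a request of level l that still fits always finds a free node of level at most l.\<close>

definition kc_invariant :: "nat \<Rightarrow> (nat \<times> nat) set \<Rightarrow> (nat \<times> nat) set \<Rightarrow> bool" where
  "kc_invariant D F A \<longleftrightarrow> finite F \<and> finite A \<and> (\<forall>p\<in>F \<union> A. snd p < D ^ fst p) \<and> F \<inter> A = {} \<and>
     tree_antichain D (F \<union> A) \<and> (\<forall>k. card {a. (k, a) \<in> F} \<le> D - 1) \<and>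
     (\<Sum>p\<in>F. level_weight D (fst p)) + (\<Sum>p\<in>A. level_weight D (fst p)) = 1"

lemma kc_invariant_free_node_below:
  assumes D: "2 \<le> D" and inv: "kc_invariant D F A"
    and fits: "(\<Sum>p\<in>A. level_weight D (fst p)) + level_weight D l \<le> 1"
  shows "\<exists>p\<in>F. fst p \<le> l"
proof (rule ccontr)
  assume "\<not> ?thesis"
  then have deep: "\<forall>p\<in>F. l < fst p" by auto
  have fin: "finite F" using inv by (simp add: kc_invariant_def)
  have free: "level_weight D l \<le> (\<Sum>p\<in>F. level_weight D (fst p))"
    using inv fits by (simp add: kc_invariant_def)
  define K where "K = Max (fst ` F)"
  have levels: "fst ` F \<subseteq> (\<lambda>j. l + 1 + j) ` {..<K - l}"
  proof
    fix k assume k: "k \<in> fst ` F"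
    then have "k \<le> K" unfolding K_def using fin by simp
    moreover have "l < k" using k deep by auto
    ultimately show "k \<in> (\<lambda>j. l + 1 + j) ` {..<K - l}" by (intro image_eqI[of _ _ "k - l - 1"]) auto
  qed
  have "(\<Sum>p\<in>F. level_weight D (fst p)) = (\<Sum>k\<in>fst ` F. real (card {a. (k, a) \<in> F}) * level_weight D k)"
    by (rule sum_level_weight_by_level[OF fin])
  also have "\<dots> \<le> (\<Sum>k\<in>fst ` F. (real D - 1) * level_weight D k)"
  proof (rule sum_mono)
    fix k
    have "card {a. (k, a) \<in> F} \<le> D - 1" using inv by (simp add: kc_invariant_def)
    then have "real (card {a. (k, a) \<in> F}) \<le> real D - 1" using D by linarith
    then show "real (card {a. (k, a) \<in> F}) * level_weight D k \<le> (real D - 1) * level_weight D k"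
      using level_weight_pos[of D k] D by (intro mult_right_mono) auto
  qed
  also have "\<dots> \<le> (\<Sum>k\<in>(\<lambda>j. l + 1 + j) ` {..<K - l}. (real D - 1) * level_weight D k)"
    using levels D level_weight_pos[of D] by (intro sum_mono2) (auto intro!: mult_nonneg_nonneg less_imp_le)
  also have "\<dots> = (\<Sum>j<K - l. (real D - 1) * level_weight D (l + 1 + j))"
    by (simp add: sum.reindex inj_on_def)
  also have "\<dots> < level_weight D l"
    using level_weight_geometric[of D l "K - l"] level_weight_pos[of D "l + (K - l)"] D by simp
  finally show False using free by simp
qed

lemma kc_invariant_split:
  assumes D: "2 \<le> D" and inv: "kc_invariant D F A" and ka: "(k, a) \<in> F" and kl: "k \<le> l"
    and gap: "\<forall>k'. k < k' \<longrightarrow> k' \<le> l \<longrightarrow> (\<forall>a'. (k', a') \<notin> F)"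
    and fits: "(\<Sum>p\<in>A. level_weight D (fst p)) + level_weight D l \<le> 1"
  shows "kc_invariant D ((F - {(k, a)}) \<union> split_nodes D k a (l - k)) (insert (l, a * D ^ (l - k)) A)"
    and "(l, a * D ^ (l - k)) \<notin> A" and "split_nodes D k a (l - k) \<inter> F = {}"
proof -
  define m where "m = l - k"
  define new where "new = (l, a * D ^ m)"
  have l: "l = k + m" using kl m_def by simp
  have finF: "finite F" and finA: "finite A" and valid: "\<forall>p\<in>F \<union> A. snd p < D ^ fst p"
    and disj: "F \<inter> A = {}" and ac: "tree_antichain D (F \<union> A)"
    and card: "\<forall>k. card {a. (k, a) \<in> F} \<le> D - 1"
    and total: "(\<Sum>p\<in>F. level_weight D (fst p)) + (\<Sum>p\<in>A. level_weight D (fst p)) = 1"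
    using inv unfolding kc_invariant_def by auto
  have a: "a < D ^ k" using bspec[OF valid UnI1[OF ka]] by simp
  have G: "split_family D k a m = insert new (split_nodes D k a m)"
    unfolding split_family_def new_def l by simp
  have "new \<notin> split_nodes D k a m" unfolding new_def split_nodes_def l by auto
  have "\<forall>q\<in>split_family D k a m. tree_ancestor D (k, a) q" using split_family_descendant[OF D] by blast
  note repl = tree_antichain_replace[OF ac UnI1[OF ka] tree_antichain_split_family[OF D] this]
  have "p \<notin> F" if "p \<in> split_nodes D k a m" for p
    using that gap split_nodes_level[of "fst p" "snd p" D k a m] l by (cases p) auto
  then show splitF: "split_nodes D k a (l - k) \<inter> F = {}" unfolding m_def[symmetric] by blast
  show newA: "(l, a * D ^ (l - k)) \<notin> A"
    using repl(2) disj ka unfolding G by (auto simp: new_def m_def)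
  have "(F - {(k, a)}) \<union> split_nodes D k a m \<union> insert new A = (F \<union> A - {(k, a)}) \<union> split_family D k a m"
    using disj ka unfolding G by auto
  moreover have "((F - {(k, a)}) \<union> split_nodes D k a m) \<inter> insert new A = {}"
    using repl(2) disj ka \<open>new \<notin> split_nodes D k a m\<close> newA unfolding G by (auto simp: new_def m_def)
  moreover have "\<forall>p\<in>(F \<union> A - {(k, a)}) \<union> split_family D k a m. snd p < D ^ fst p"
    using valid split_family_valid[OF D a] by blast
  moreover have "(\<Sum>p\<in>insert new A. level_weight D (fst p)) = (\<Sum>p\<in>A. level_weight D (fst p)) + level_weight D l"
    using finA newA unfolding new_def m_def by simp
  ultimately show "kc_invariant D ((F - {(k, a)}) \<union> split_nodes D k a (l - k)) (insert (l, a * D ^ (l - k)) A)"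
    using finF finA repl(1) total card_level_split_replace[OF finF card gap[unfolded l]]
      sum_level_weight_split_replace[OF _ finF ka splitF[folded m_def]] D
    unfolding kc_invariant_def new_def m_def[symmetric] l by auto
qed

text \<open>A natural number S encodes the finite set of nodes whose pair codes are the bits of S.\<close>

definition node_set :: "nat \<Rightarrow> (nat \<times> nat) set" where
  "node_set S = {p. prod_encode p \<in> set_decode S}"

lemma finite_node_set [simp]: "finite (node_set S)"
proof -
  have "node_set S \<subseteq> prod_decode ` set_decode S"
    unfolding node_set_def by (auto intro: image_eqI[where x="prod_encode _"])
  then show ?thesis by (rule finite_subset) simp
qed

lemma set_decode_eq_image_node_set: "set_decode S = prod_encode ` node_set S"
  unfolding node_set_def by (auto intro: image_eqI[where x="prod_decode _"])

lemma node_set_set_encode: "finite F \<Longrightarrow> node_set (set_encode (prod_encode ` F)) = F"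
  unfolding node_set_def by (auto simp: inj_on_def)

lemma set_encode_union:
  "finite Y \<Longrightarrow> finite Z \<Longrightarrow> Y \<inter> Z = {} \<Longrightarrow> set_encode (Y \<union> Z) = set_encode Y + set_encode Z"
  unfolding set_encode_def by (rule sum.union_disjoint)

definition has_node_at :: "nat \<Rightarrow> nat \<Rightarrow> nat \<Rightarrow> bool" where
  "has_node_at D S k \<longleftrightarrow> (\<exists>a<D ^ k. (k, a) \<in> node_set S)"

definition deepest_level :: "nat \<Rightarrow> nat \<Rightarrow> nat \<Rightarrow> nat" where
  "deepest_level D S l = l - bounded_min (Suc l) (\<lambda>j. has_node_at D S (l - j))"

definition first_index :: "nat \<Rightarrow> nat \<Rightarrow> nat \<Rightarrow> nat" where
  "first_index D S k = bounded_min (D ^ k) (\<lambda>a. (k, a) \<in> node_set S)"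

text \<open>One allocation step for a request of level l: the free node (k, a) on the deepest level
  k \<le> l is split down to level l; kc_step is the new free set and kc_index the index of the
  allocated node on level l.\<close>

definition kc_step :: "nat \<Rightarrow> nat \<Rightarrow> nat \<Rightarrow> nat" where
  "kc_step D S l = (let k = deepest_level D S l; a = first_index D S k in
     S - 2 ^ prod_encode (k, a) + (\<Sum>j<l - k. \<Sum>t<D - 1. 2 ^ prod_encode (k + 1 + j, a * D ^ (j + 1) + (t + 1))))"

definition kc_index :: "nat \<Rightarrow> nat \<Rightarrow> nat \<Rightarrow> nat" where
  "kc_index D S l = first_index D S (deepest_level D S l) * D ^ (l - deepest_level D S l)"

lemma kc_select:
  assumes D: "2 \<le> D" and inv: "kc_invariant D (node_set S) A"
    and fits: "(\<Sum>p\<in>A. level_weight D (fst p)) + level_weight D l \<le> 1"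
  shows "(deepest_level D S l, first_index D S (deepest_level D S l)) \<in> node_set S"
    and "deepest_level D S l \<le> l"
    and "\<forall>k'. deepest_level D S l < k' \<longrightarrow> k' \<le> l \<longrightarrow> (\<forall>a'. (k', a') \<notin> node_set S)"
proof -
  have valid: "\<forall>p\<in>node_set S. snd p < D ^ fst p" using inv unfolding kc_invariant_def by auto
  obtain p where p: "p \<in> node_set S" "fst p \<le> l" using kc_invariant_free_node_below[OF D inv fits] by blast
  have ex: "\<exists>j<Suc l. has_node_at D S (l - j)"
  proof (intro exI conjI)
    have "fst p = l - (l - fst p)" using p by simp
    then show "has_node_at D S (l - (l - fst p))" unfolding has_node_at_def using p valid
      by (metis prod.collapse)
  qed simp
  define J where "J = (LEAST j. has_node_at D S (l - j))"
  have k: "deepest_level D S l = l - J" unfolding deepest_level_def J_def bounded_min_eq using ex by simp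
  show "deepest_level D S l \<le> l" using k by simp
  show "\<forall>k'. deepest_level D S l < k' \<longrightarrow> k' \<le> l \<longrightarrow> (\<forall>a'. (k', a') \<notin> node_set S)"
  proof (intro allI impI notI)
    fix k' a' assume k1: "deepest_level D S l < k'" and k2: "k' \<le> l" and "(k', a') \<in> node_set S"
    then have "has_node_at D S (l - (l - k'))" using valid unfolding has_node_at_def by fastforce
    moreover have "l - k' < J" using k1 k2 k by simp
    ultimately show False unfolding J_def using not_less_Least by blast
  qed
  have "has_node_at D S (l - J)" unfolding J_def using ex by (auto intro: LeastI_ex)
  then show "(deepest_level D S l, first_index D S (deepest_level D S l)) \<in> node_set S"
    unfolding first_index_def bounded_min_eq has_node_at_def k by (auto intro: LeastI_ex)
qed

lemma node_set_kc_step: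
  assumes ka: "(k, a) \<in> node_set S" and new: "split_nodes D k a (l - k) \<inter> node_set S = {}"
  shows "node_set (S - 2 ^ prod_encode (k, a) +
      (\<Sum>j<l - k. \<Sum>t<D - 1. 2 ^ prod_encode (k + 1 + j, a * D ^ (j + 1) + (t + 1))))
    = (node_set S - {(k, a)}) \<union> split_nodes D k a (l - k)"
proof -
  define h where "h = (\<lambda>(j, t). (k + 1 + j, a * D ^ (j + 1) + (t + 1)))"
  have hinj: "inj_on h ({..<l - k} \<times> {..<D - 1})" unfolding h_def by (auto simp: inj_on_def)
  have S: "S = set_encode (prod_encode ` node_set S)"
    using set_decode_inverse[of S] set_decode_eq_image_node_set[of S] by simp
  have "prod_encode ` node_set S = insert (prod_encode (k, a)) (prod_encode ` (node_set S - {(k, a)}))"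
    using ka by auto
  moreover have "prod_encode (k, a) \<notin> prod_encode ` (node_set S - {(k, a)})" by auto
  ultimately have removed: "S - 2 ^ prod_encode (k, a) = set_encode (prod_encode ` (node_set S - {(k, a)}))"
    by (subst S) simp
  have "(\<Sum>j<l - k. \<Sum>t<D - 1. (2::nat) ^ prod_encode (k + 1 + j, a * D ^ (j + 1) + (t + 1)))
      = (\<Sum>x\<in>{..<l - k} \<times> {..<D - 1}. 2 ^ prod_encode (h x))"
    unfolding h_def by (simp add: sum.cartesian_product case_prod_beta)
  also have "\<dots> = (\<Sum>p\<in>split_nodes D k a (l - k). 2 ^ prod_encode p)"
    unfolding split_nodes_def h_def[symmetric] using hinj by (simp add: sum.reindex)
  also have "\<dots> = set_encode (prod_encode ` split_nodes D k a (l - k))"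
    unfolding set_encode_def by (simp add: sum.reindex inj_on_def)
  finally have added: "(\<Sum>j<l - k. \<Sum>t<D - 1. (2::nat) ^ prod_encode (k + 1 + j, a * D ^ (j + 1) + (t + 1)))
      = set_encode (prod_encode ` split_nodes D k a (l - k))" .
  have "prod_encode ` (node_set S - {(k, a)}) \<inter> prod_encode ` split_nodes D k a (l - k) = {}"
    using new by auto
  then have "set_encode (prod_encode ` (node_set S - {(k, a)})) + set_encode (prod_encode ` split_nodes D k a (l - k))
      = set_encode (prod_encode ` ((node_set S - {(k, a)}) \<union> split_nodes D k a (l - k)))"
    by (simp add: set_encode_union image_Un)
  then show ?thesis unfolding removed added by (simp add: node_set_set_encode)
qed

lemma kc_step_invariant:
  assumes D: "2 \<le> D" and inv: "kc_invariant D (node_set S) A"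
    and fits: "(\<Sum>p\<in>A. level_weight D (fst p)) + level_weight D l \<le> 1"
  defines "k \<equiv> deepest_level D S l"
  shows "kc_invariant D (node_set (kc_step D S l)) (insert (l, kc_index D S l) A)"
    and "(l, kc_index D S l) \<notin> A"
proof -
  note sel = kc_select[OF D inv fits, folded k_def]
  note split = kc_invariant_split[OF D inv sel fits]
  have "node_set (kc_step D S l) = (node_set S - {(k, first_index D S k)}) \<union> split_nodes D k (first_index D S k) (l - k)"
    unfolding kc_step_def Let_def k_def[symmetric] using sel(1) split(3) by (rule node_set_kc_step)
  then show "kc_invariant D (node_set (kc_step D S l)) (insert (l, kc_index D S l) A)"
    using split(1) unfolding kc_index_def k_def[symmetric] by simp
  show "(l, kc_index D S l) \<notin> A" using split(2) unfolding kc_index_def k_def[symmetric] .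
qed

text \<open>Online allocation: the numbers t are scanned in increasing order, q t decides whether t is a
  request and lv t is its level. The initial state 1 encodes the root (0, 0) as the only free node.\<close>

definition kc_state :: "nat \<Rightarrow> (nat \<Rightarrow> bool) \<Rightarrow> (nat \<Rightarrow> nat) \<Rightarrow> nat \<Rightarrow> nat" where
  "kc_state D q lv s = rec_nat 1 (\<lambda>t S. if q t then kc_step D S (lv t) else S) s"

definition kc_node :: "nat \<Rightarrow> (nat \<Rightarrow> bool) \<Rightarrow> (nat \<Rightarrow> nat) \<Rightarrow> nat \<Rightarrow> nat \<times> nat" where
  "kc_node D q lv t = (lv t, kc_index D (kc_state D q lv t) (lv t))"

lemma node_set_one: "node_set 1 = {(0, 0)}"
  using node_set_set_encode[of "{(0, 0)}"] by (simp add: prod_encode_def)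

lemma kc_invariant_root: "2 \<le> D \<Longrightarrow> kc_invariant D {(0, 0)} {}"
  unfolding kc_invariant_def tree_antichain_def
  by (auto simp: level_weight_def card_le_Suc0_iff_eq intro!: le_trans[OF card_le_Suc0_iff_eq[THEN iffD2]])

lemma kc_state_invariant:
  assumes D: "2 \<le> D" and kraft: "\<forall>s. (\<Sum>t\<in>{t. t \<le> s \<and> q t}. level_weight D (lv t)) \<le> 1"
  shows "kc_invariant D (node_set (kc_state D q lv s)) (kc_node D q lv ` {t. t < s \<and> q t}) \<and>
         inj_on (kc_node D q lv) {t. t < s \<and> q t}"
proof (induct s)
  case 0
  show ?case using kc_invariant_root[OF D] node_set_one by (simp add: kc_state_def)
next
  case (Suc s)
  let ?A = "kc_node D q lv ` {t. t < s \<and> q t}"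
  show ?case
  proof (cases "q s")
    case False
    then have "{t. t < Suc s \<and> q t} = {t. t < s \<and> q t}" using less_Suc_eq by auto
    then show ?thesis using Suc False by (simp add: kc_state_def)
  next
    case True
    define S where "S = kc_state D q lv s"
    have inv: "kc_invariant D (node_set S) ?A" and inj: "inj_on (kc_node D q lv) {t. t < s \<and> q t}"
      using Suc unfolding S_def by auto
    have "(\<Sum>p\<in>?A. level_weight D (fst p)) = (\<Sum>t\<in>{t. t < s \<and> q t}. level_weight D (lv t))"
      using sum.reindex[OF inj, of "\<lambda>p. level_weight D (fst p)"] by (simp add: kc_node_def)
    moreover have "{t. t \<le> s \<and> q t} = insert s {t. t < s \<and> q t}" using True by auto
    ultimately have fits: "(\<Sum>p\<in>?A. level_weight D (fst p)) + level_weight D (lv s) \<le> 1"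
      using kraft[rule_format, of s] by (simp add: add.commute)
    have node: "kc_node D q lv s = (lv s, kc_index D S (lv s))" unfolding kc_node_def S_def ..
    have "{t. t < Suc s \<and> q t} = insert s {t. t < s \<and> q t}" using True less_Suc_eq by auto
    moreover have "kc_state D q lv (Suc s) = kc_step D S (lv s)" using True by (simp add: kc_state_def S_def)
    ultimately show ?thesis
      using kc_step_invariant[OF D inv fits] inj by (simp add: node)
  qed
qed

lemma kc_node_incomparable:
  assumes D: "2 \<le> D" and kraft: "\<forall>s. (\<Sum>t\<in>{t. t \<le> s \<and> q t}. level_weight D (lv t)) \<le> 1"
    and "q t1" "q t2" "t1 \<noteq> t2"
  shows "tree_incomparable D (kc_node D q lv t1) (kc_node D q lv t2)"
proof -
  define s where "s = Suc (max t1 t2)"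
  note inv = kc_state_invariant[OF D kraft, of s]
  have "t1 \<in> {t. t < s \<and> q t}" "t2 \<in> {t. t < s \<and> q t}" using assms(3,4) unfolding s_def by auto
  moreover have "kc_node D q lv t1 \<noteq> kc_node D q lv t2" using inv assms(5) calculation by (auto dest: inj_onD)
  ultimately show ?thesis using inv unfolding kc_invariant_def tree_antichain_def by blast
qed

lemma kc_node_valid:
  assumes D: "2 \<le> D" and kraft: "\<forall>s. (\<Sum>t\<in>{t. t \<le> s \<and> q t}. level_weight D (lv t)) \<le> 1"
    and "q t"
  shows "snd (kc_node D q lv t) < D ^ fst (kc_node D q lv t)"
proof -
  have "kc_node D q lv t \<in> kc_node D q lv ` {t'. t' < Suc t \<and> q t'}" using assms(3) by auto
  then show ?thesis using kc_state_invariant[OF D kraft, of "Suc t"] unfolding kc_invariant_def by blast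
qed


section \<open>Computability of the allocation\<close>

lemma rec_pred_mem_node_set [total_rec_intros]:
  "total_rec n f \<Longrightarrow> total_rec n g \<Longrightarrow> total_rec n h \<Longrightarrow> rec_pred n (\<lambda>xs. (g xs, h xs) \<in> node_set (f xs))"
  unfolding node_set_def by (simp add: rec_pred_mem_set_decode total_rec_prod_encode)

lemma rec_pred_has_node_at_args: "rec_pred 2 (\<lambda>xs. has_node_at D (xs ! 0) (xs ! 1))"
proof -
  have "rec_pred (Suc 2) (\<lambda>ys. (ys ! 2, ys ! 0) \<in> node_set (ys ! 1))"
    by (intro total_rec_intros) simp_all
  then have "rec_pred 2 (\<lambda>xs. \<exists>j<D ^ (xs ! 1). ((j # xs) ! 2, (j # xs) ! 0) \<in> node_set ((j # xs) ! 1))"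
    by (rule rec_pred_bex) (intro total_rec_intros, simp)
  then show ?thesis by (rule rec_pred_cong) (simp add: has_node_at_def)
qed

lemma total_rec_deepest_level_args: "total_rec 2 (\<lambda>xs. deepest_level D (xs ! 0) (xs ! 1))"
proof -
  have "rec_pred (Suc 2) (\<lambda>ys. has_node_at D (ys ! 1) (ys ! 2 - ys ! 0))"
    by (rule rec_pred_comp2[OF rec_pred_has_node_at_args]; intro total_rec_intros; simp)
  then have "total_rec 2 (\<lambda>xs. xs ! 1 - bounded_min (Suc (xs ! 1))
      (\<lambda>j. has_node_at D ((j # xs) ! 1) ((j # xs) ! 2 - (j # xs) ! 0)))"
    by (intro total_rec_intros total_rec_bounded_min) simp_all
  then show ?thesis by (rule total_rec_cong) (simp add: deepest_level_def)
qed

lemma total_rec_first_index_args: "total_rec 2 (\<lambda>xs. first_index D (xs ! 0) (xs ! 1))"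
proof -
  have "rec_pred (Suc 2) (\<lambda>ys. (ys ! 2, ys ! 0) \<in> node_set (ys ! 1))"
    by (intro total_rec_intros) simp_all
  then have "total_rec 2 (\<lambda>xs. bounded_min (D ^ (xs ! 1)) (\<lambda>j. ((j # xs) ! 2, (j # xs) ! 0) \<in> node_set ((j # xs) ! 1)))"
    by (rule total_rec_bounded_min) (intro total_rec_intros, simp)
  then show ?thesis by (rule total_rec_cong) (simp add: first_index_def)
qed

lemma total_rec_deepest_level [total_rec_intros]:
  "total_rec n f \<Longrightarrow> total_rec n g \<Longrightarrow> total_rec n (\<lambda>xs. deepest_level D (f xs) (g xs))"
  by (rule total_rec_comp2[OF total_rec_deepest_level_args])

lemma total_rec_first_index [total_rec_intros]:
  "total_rec n f \<Longrightarrow> total_rec n g \<Longrightarrow> total_rec n (\<lambda>xs. first_index D (f xs) (g xs))"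
  by (rule total_rec_comp2[OF total_rec_first_index_args])

lemma total_rec_kc_step_args: "total_rec 2 (\<lambda>xs. kc_step D (xs ! 0) (xs ! 1))"
proof -
  define K where "K = (\<lambda>xs::nat list. deepest_level D (xs ! 0) (xs ! 1))"
  define A where "A = (\<lambda>xs::nat list. first_index D (xs ! 0) (K xs))"
  have K: "total_rec 2 K" unfolding K_def by (intro total_rec_intros) simp_all
  have A: "total_rec 2 A" unfolding A_def by (intro total_rec_intros K) simp
  have "total_rec (Suc (Suc 2)) (\<lambda>ys. 2 ^ prod_encode (K (tl (tl ys)) + 1 + ys ! 1,
          A (tl (tl ys)) * D ^ (ys ! 1 + 1) + (ys ! 0 + 1)))"
    by (intro total_rec_intros total_rec_tl K A) simp_all
  then have inner: "total_rec (Suc 2) (\<lambda>zs. \<Sum>t<D - 1. (\<lambda>ys. 2 ^ prod_encode (K (tl (tl ys)) + 1 + ys ! 1,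
          A (tl (tl ys)) * D ^ (ys ! 1 + 1) + (ys ! 0 + 1))) (t # zs))"
    by (rule total_rec_sum[OF _ total_rec_const])
  have "total_rec 2 (\<lambda>xs. xs ! 0 - 2 ^ prod_encode (K xs, A xs) +
     (\<Sum>j<xs ! 1 - K xs. (\<lambda>zs. \<Sum>t<D - 1. (\<lambda>ys. 2 ^ prod_encode (K (tl (tl ys)) + 1 + ys ! 1,
          A (tl (tl ys)) * D ^ (ys ! 1 + 1) + (ys ! 0 + 1))) (t # zs)) (j # xs)))"
    by (intro total_rec_intros total_rec_sum[OF inner] K A) simp_all
  then show ?thesis by (rule total_rec_cong) (simp add: kc_step_def Let_def K_def A_def)
qed

lemma total_rec_kc_step [total_rec_intros]:
  "total_rec n f \<Longrightarrow> total_rec n g \<Longrightarrow> total_rec n (\<lambda>xs. kc_step D (f xs) (g xs))"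
  by (rule total_rec_comp2[OF total_rec_kc_step_args])

lemma total_rec_kc_index [total_rec_intros]:
  "total_rec n f \<Longrightarrow> total_rec n g \<Longrightarrow> total_rec n (\<lambda>xs. kc_index D (f xs) (g xs))"
  unfolding kc_index_def by (intro total_rec_intros)

lemma total_rec_kc_state:
  assumes q: "rec_pred 2 (\<lambda>xs. q (xs ! 0) (xs ! 1))" and lv: "total_rec 1 (\<lambda>xs. lv (xs ! 0))"
  shows "total_rec 2 (\<lambda>xs. kc_state D (q (xs ! 0)) lv (xs ! 1))"
proof -
  have step: "total_rec (Suc (Suc 2)) (\<lambda>ys. if q (ys ! 2) (ys ! 0) then kc_step D (ys ! 1) (lv (ys ! 0)) else ys ! 1)"
    by (intro total_rec_intros rec_pred_comp2[OF q] total_rec_comp1[OF lv]) simp_all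
  have "total_rec 2 (\<lambda>xs. rec_nat 1 (\<lambda>y r. (\<lambda>ys. if q (ys ! 2) (ys ! 0) then kc_step D (ys ! 1) (lv (ys ! 0))
      else ys ! 1) (y # r # xs)) (xs ! 1))"
    by (rule total_rec_rec_nat[OF _ total_rec_const step]) (simp add: total_rec_proj)
  then show ?thesis by (rule total_rec_cong) (simp add: kc_state_def, rule rec_nat_fun_cong, simp)
qed


section \<open>Strings over a countable alphabet\<close>

lemma finite_to_nat_less: "finite {b::'a::countable. to_nat b < n}"
proof -
  have "to_nat ` {b::'a. to_nat b < n} \<subseteq> {..<n}" by auto
  then have "finite (to_nat ` {b::'a. to_nat b < n})" by (rule finite_subset) simp
  then show ?thesis by (rule finite_imageD) (simp add: inj_on_def)
qed

lemma sym_code_less: "to_nat (a::'a::countable) < to_nat (a'::'a) \<Longrightarrow> sym_code a < sym_code a'"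
  unfolding sym_code_def by (rule psubset_card_mono[OF finite_to_nat_less]) auto

lemma inj_sym_code: "inj (sym_code :: 'a::countable \<Rightarrow> nat)"
proof (rule injI)
  fix a b :: 'a assume e: "sym_code a = sym_code b"
  show "a = b"
  proof (rule ccontr)
    assume "a \<noteq> b"
    then have "to_nat a \<noteq> to_nat b" by simp
    then have "to_nat a < to_nat b \<or> to_nat b < to_nat a" by arith
    then show False using sym_code_less[of a b] sym_code_less[of b a] e by auto
  qed
qed

lemma sym_code_Suc_imp_range:
  assumes sa: "sym_code (a::'a::countable) = Suc m"
  shows "m \<in> range (sym_code :: 'a \<Rightarrow> nat)"
proof -
  define X where "X = {b::'a. to_nat b < to_nat a}"
  have finX: "finite X" unfolding X_def by (rule finite_to_nat_less)
  have cX: "card X = Suc m" using sa unfolding sym_code_def X_def .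
  then have "X \<noteq> {}" by auto
  then obtain b where b: "b \<in> X" "to_nat b = Max (to_nat ` X)" using finX
    by (metis (mono_tags, lifting) Max_in empty_is_image finite_imageI imageE)
  have "{c. to_nat c < to_nat b} = X - {b}"
  proof
    show "X - {b} \<subseteq> {c. to_nat c < to_nat b}"
    proof
      fix c assume c: "c \<in> X - {b}"
      then have "to_nat c \<le> to_nat b" using b finX by simp
      moreover have "to_nat c \<noteq> to_nat b" using c by auto
      ultimately have "to_nat c < to_nat b" by (rule le_neq_implies_less)
      then show "c \<in> {c. to_nat c < to_nat b}" by simp
    qed
  qed (use b in \<open>auto simp: X_def\<close>)
  then have "sym_code b = m" unfolding sym_code_def using cX b finX by simp
  then show ?thesis by blast
qed

lemma less_sym_code_imp_range: "m < sym_code (a::'a::countable) \<Longrightarrow> m \<in> range (sym_code :: 'a \<Rightarrow> nat)"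
proof (induct "sym_code a" arbitrary: a m)
  case (Suc n)
  obtain b :: 'a where b: "sym_code b = n" using sym_code_Suc_imp_range[of a n] Suc.hyps(2) by auto
  show ?case
  proof (cases "m = n")
    case False then show ?thesis using Suc b by (metis less_SucE)
  qed (use b in blast)
qed simp

lemma range_sym_code_finite:
  assumes "finite (UNIV :: 'a::countable set)"
  shows "range (sym_code :: 'a \<Rightarrow> nat) = {..<card (UNIV :: 'a set)}"
proof (rule card_subset_eq)
  show "range (sym_code :: 'a \<Rightarrow> nat) \<subseteq> {..<card (UNIV :: 'a set)}"
  proof
    fix n assume "n \<in> range (sym_code :: 'a \<Rightarrow> nat)"
    then obtain a :: 'a where a: "n = sym_code a" by auto
    have "card {b::'a. to_nat b < to_nat a} < card (UNIV :: 'a set)"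
      by (rule psubset_card_mono[OF assms]) auto
    then show "n \<in> {..<card (UNIV :: 'a set)}" using a unfolding sym_code_def by simp
  qed
  show "card (range (sym_code :: 'a \<Rightarrow> nat)) = card {..<card (UNIV :: 'a set)}"
    using card_image[OF inj_sym_code] by simp
qed simp

lemma range_sym_code_infinite:
  assumes "infinite (UNIV :: 'a::countable set)"
  shows "range (sym_code :: 'a \<Rightarrow> nat) = UNIV"
proof -
  have inf: "infinite (range (sym_code :: 'a \<Rightarrow> nat))"
    using assms inj_sym_code finite_imageD by blast
  have "m \<in> range (sym_code :: 'a \<Rightarrow> nat)" for m
  proof -
    obtain r where r: "r \<in> range (sym_code :: 'a \<Rightarrow> nat)" "m < r"
      using inf by (meson finite_nat_set_iff_bounded_le not_le)
    then show ?thesis using less_sym_code_imp_range by auto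
  qed
  then show ?thesis by auto
qed

lemma rec_pred_range_sym_code:
  "total_rec n f \<Longrightarrow> rec_pred n (\<lambda>xs. f xs \<in> range (sym_code :: 'a::countable \<Rightarrow> nat))"
  by (cases "finite (UNIV :: 'a set)")
    (simp_all add: range_sym_code_finite range_sym_code_infinite total_rec_intros)

definition str_code_valid :: "'a::countable itself \<Rightarrow> nat \<Rightarrow> bool" where
  "str_code_valid _ i \<longleftrightarrow> (\<forall>j<length_code i. nth_code i j \<in> range (sym_code :: 'a \<Rightarrow> nat))"

lemma str_code_valid_iff: "str_code_valid TYPE('a::countable) i \<longleftrightarrow> (\<exists>x::'a list. str_code x = i)"
proof
  assume v: "str_code_valid TYPE('a) i"
  define ys where "ys = list_decode i"
  have i: "i = list_encode ys" unfolding ys_def by simp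
  have "\<forall>y\<in>set ys. y \<in> range (sym_code :: 'a \<Rightarrow> nat)"
    using v unfolding str_code_valid_def i by (auto simp: in_set_conv_nth nth_code_list_encode)
  then have "map (sym_code \<circ> inv (sym_code :: 'a \<Rightarrow> nat)) ys = ys"
    by (intro map_idI) (simp add: f_inv_into_f)
  then show "\<exists>x::'a list. str_code x = i"
    by (intro exI[of _ "map (inv (sym_code :: 'a \<Rightarrow> nat)) ys"]) (simp add: str_code_def i)
next
  assume "\<exists>x::'a list. str_code x = i"
  then show "str_code_valid TYPE('a) i"
    unfolding str_code_valid_def str_code_def by (auto simp: nth_code_list_encode)
qed

lemma rec_pred_str_code_valid [total_rec_intros]:
  "total_rec n f \<Longrightarrow> rec_pred n (\<lambda>xs. str_code_valid TYPE('a::countable) (f xs))"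
proof (rule rec_pred_comp1)
  have "rec_pred 1 (\<lambda>xs. \<forall>j<length_code (xs!0). nth_code ((j # xs) ! 1) ((j # xs) ! 0) \<in> range (sym_code :: 'a \<Rightarrow> nat))"
    by (intro rec_pred_ball rec_pred_range_sym_code total_rec_intros) simp_all
  then show "rec_pred 1 (\<lambda>xs. str_code_valid TYPE('a) (xs ! 0))"
    by (rule rec_pred_cong) (simp add: str_code_valid_def)
qed

lemma inj_str_code: "inj (str_code :: 'a::countable list \<Rightarrow> nat)"
proof (rule injI)
  fix x y :: "'a list" assume "str_code x = str_code y"
  then have "map sym_code x = map sym_code y" unfolding str_code_def by (simp add: list_encode_eq)
  then show "x = y" by (metis inj_map_eq_map inj_sym_code)
qed

lemma length_code_str_code [simp]: "length_code (str_code x) = length x"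
  unfolding str_code_def by simp


section \<open>Shannon-Fano and Bayesian codes\<close>

lemma cyl_sets: "cyl x \<in> sets (seqspace :: (nat \<Rightarrow> 'a) measure)"
proof (cases "x = []")
  case True
  then have "cyl x = space (seqspace :: (nat \<Rightarrow> 'a) measure)" by (simp add: cyl_def seqspace_def space_PiM)
  then show ?thesis using sets.top[of "seqspace :: (nat \<Rightarrow> 'a) measure"] by simp
next
  case False
  have comp: "\<And>i. (\<lambda>\<omega>::nat \<Rightarrow> 'a. \<omega> i) -` {x ! i} \<inter> space seqspace \<in> sets seqspace"
    unfolding seqspace_def by (rule measurable_sets[OF measurable_component_singleton]) auto
  have "cyl x = (\<Inter>i\<in>{..<length x}. (\<lambda>\<omega>::nat \<Rightarrow> 'a. \<omega> i) -` {x ! i} \<inter> space seqspace)"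
    unfolding cyl_def seqspace_def by (auto simp: space_PiM)
  also have "\<dots> \<in> sets seqspace" using False comp by (intro sets.finite_INT) auto
  finally show ?thesis .
qed

lemma cyl_disjoint: "length x = length y \<Longrightarrow> x \<noteq> y \<Longrightarrow> cyl x \<inter> cyl y = {}"
  unfolding cyl_def by (auto simp: list_eq_iff_nth_eq)

lemma sum_measure_cyl_le_1:
  assumes "prob_space P" "sets P = sets seqspace" "finite X" "\<forall>x\<in>X. length x = n"
  shows "(\<Sum>x\<in>X. measure P (cyl x)) \<le> 1"
proof -
  interpret prob_space P by (rule assms(1))
  have "(\<Sum>x\<in>X. measure P (cyl x)) = measure P (\<Union>x\<in>X. cyl x)"
    using assms(2-4) cyl_sets
    by (intro measure_finite_Union[symmetric]) (auto simp: disjoint_family_on_def cyl_disjoint)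
  also have "\<dots> \<le> 1" by (rule prob_le_1)
  finally show ?thesis .
qed

definition sf_length :: "nat \<Rightarrow> real \<Rightarrow> nat" where
  "sf_length D p = nat \<lceil>- log (real D) p\<rceil>"

lemma one_le_mult_power_iff_sf_length_le:
  assumes D: "2 \<le> D" and p: "0 < p"
  shows "1 \<le> p * real D ^ m \<longleftrightarrow> sf_length D p \<le> m"
proof -
  have D1: "1 < real D" using D by simp
  have "1 \<le> p * real D ^ m \<longleftrightarrow> 0 \<le> log (real D) (p * real D ^ m)"
    using D1 p by simp
  also have "log (real D) (p * real D ^ m) = log (real D) p + real m"
    using D1 p by (simp add: log_mult log_nat_power)
  also have "0 \<le> log (real D) p + real m \<longleftrightarrow> \<lceil>- log (real D) p\<rceil> \<le> int m"
    by (simp add: ceiling_le_iff) linarith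
  also have "\<dots> \<longleftrightarrow> sf_length D p \<le> m" unfolding sf_length_def by linarith
  finally show ?thesis .
qed

lemma level_weight_sf_length_le: "2 \<le> D \<Longrightarrow> 0 < p \<Longrightarrow> level_weight D (sf_length D p) \<le> p"
  using one_le_mult_power_iff_sf_length_le[of D p "sf_length D p"]
  unfolding level_weight_def by (simp add: field_simps)

lemma sf_length_less: "real K + log (real D) p > 0 \<Longrightarrow> real (sf_length D p) < real K + 1"
  unfolding sf_length_def by linarith

locale computable_bayes_setting =
  fixes D :: nat and P :: "(nat \<Rightarrow> 'a::countable) measure" and f :: "nat \<Rightarrow> nat option"
    and c :: "nat \<Rightarrow> nat list"
  assumes D: "2 \<le> D" and prob_space_P: "prob_space P" and sets_P: "sets P = sets seqspace"
    and computable_f: "computable1 f"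
    and f_eq: "\<forall>x m. f (prod_encode (str_code (x::'a list), m)) = Some (nat \<lfloor>measure P (cyl x) * real D ^ m\<rfloor>)"
    and computable_c: "computable_nat_code D c"
begin

definition prob_cyl :: "'a list \<Rightarrow> real" where
  "prob_cyl x = measure P (cyl x)"

definition sf_len :: "'a list \<Rightarrow> nat" where
  "sf_len x = sf_length D (prob_cyl x)"

text \<open>f need only be defined on codes of strings, so other numbers are replaced by 0, the code of
  the empty string.\<close>

definition prob_floor :: "nat \<Rightarrow> nat \<Rightarrow> nat" where
  "prob_floor i m = the (f (prod_encode (if str_code_valid TYPE('a) i then i else 0, m)))"

text \<open>The Shannon-Fano codewords of the strings of length n are obtained by running the allocation
  on the requests (x, sf_len x), numbered by their pair codes. Since sf_len x is the least m with
  1 \<le> prob_floor (str_code x) m, being a request is decidable.\<close>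

definition request :: "'a list \<Rightarrow> nat" where
  "request x = prod_encode (str_code x, sf_len x)"

definition is_request :: "nat \<Rightarrow> nat \<Rightarrow> bool" where
  "is_request n s \<longleftrightarrow> (let i = fst (prod_decode s); m = snd (prod_decode s) in
     str_code_valid TYPE('a) i \<and> length_code i = n \<and> 1 \<le> prob_floor i m \<and>
     (m = 0 \<or> prob_floor i (m - 1) = 0))"

definition request_level :: "nat \<Rightarrow> nat" where
  "request_level s = snd (prod_decode s)"

definition sf_node :: "'a list \<Rightarrow> nat \<times> nat" where
  "sf_node x = kc_node D (is_request (length x)) request_level (request x)"

definition sf_code :: "'a list \<Rightarrow> nat list option" where
  "sf_code x = (if 0 < prob_cyl x then Some (digits D (fst (sf_node x)) (snd (sf_node x))) else None)"

lemma prob_floor_str_code: "prob_floor (str_code x) m = nat \<lfloor>prob_cyl x * real D ^ m\<rfloor>"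
  using f_eq str_code_valid_iff unfolding prob_floor_def prob_cyl_def by auto

lemma one_le_prob_floor_iff: "1 \<le> prob_floor (str_code x) m \<longleftrightarrow> 0 < prob_cyl x \<and> sf_len x \<le> m"
proof (cases "0 < prob_cyl x")
  case True
  have "1 \<le> nat \<lfloor>prob_cyl x * real D ^ m\<rfloor> \<longleftrightarrow> 1 \<le> prob_cyl x * real D ^ m" by linarith
  then show ?thesis using one_le_mult_power_iff_sf_length_le[OF D True] True
    unfolding prob_floor_str_code sf_len_def by simp
next
  case False
  then have "prob_cyl x = 0" unfolding prob_cyl_def using measure_nonneg[of P "cyl x"] by simp
  then show ?thesis unfolding prob_floor_str_code by simp
qed

lemma total_rec_prob_floor_args: "total_rec 2 (\<lambda>xs. prob_floor (xs ! 0) (xs ! 1))"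
  unfolding prob_floor_def
proof (rule total_rec_comp_computable1[OF computable_f])
  show "total_rec 2 (\<lambda>xs. prod_encode (if str_code_valid TYPE('a) (xs ! 0) then xs ! 0 else 0, xs ! 1))"
    by (intro total_rec_intros) simp_all
  fix xs :: "nat list"
  have "\<exists>x::'a list. str_code x = (if str_code_valid TYPE('a) (xs ! 0) then xs ! 0 else 0)"
  proof (cases "str_code_valid TYPE('a) (xs ! 0)")
    case False then show ?thesis by (intro exI[of _ "[]"]) (simp add: str_code_def)
  qed (simp add: str_code_valid_iff)
  then show "f (prod_encode (if str_code_valid TYPE('a) (xs ! 0) then xs ! 0 else 0, xs ! 1)) \<noteq> None"
    using f_eq by (metis option.distinct(1))
qed

lemma total_rec_prob_floor [total_rec_intros]:
  "total_rec n g \<Longrightarrow> total_rec n h \<Longrightarrow> total_rec n (\<lambda>xs. prob_floor (g xs) (h xs))"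
  by (rule total_rec_comp2[OF total_rec_prob_floor_args])

lemma is_request_iff: "is_request n s \<longleftrightarrow> (\<exists>x. s = request x \<and> length x = n \<and> 0 < prob_cyl x)"
proof
  assume "is_request n s"
  define i where "i = fst (prod_decode s)"
  define m where "m = snd (prod_decode s)"
  have s: "s = prod_encode (i, m)" unfolding i_def m_def by simp
  have r: "str_code_valid TYPE('a) i" "length_code i = n" "1 \<le> prob_floor i m"
    "m = 0 \<or> prob_floor i (m - 1) = 0"
    using \<open>is_request n s\<close> unfolding is_request_def Let_def i_def[symmetric] m_def[symmetric] by auto
  then obtain x :: "'a list" where x: "i = str_code x" using str_code_valid_iff by metis
  have "length x = n" using r(2) unfolding x by simp
  moreover have p: "0 < prob_cyl x" and le: "sf_len x \<le> m"
    using r(3) one_le_prob_floor_iff unfolding x by auto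
  moreover have "m \<le> sf_len x"
  proof (rule ccontr)
    assume "\<not> m \<le> sf_len x"
    then show False using r(4) one_le_prob_floor_iff[of x "m - 1"] p unfolding x by auto
  qed
  ultimately show "\<exists>x. s = request x \<and> length x = n \<and> 0 < prob_cyl x"
    using s x unfolding request_def by auto
next
  assume "\<exists>x. s = request x \<and> length x = n \<and> 0 < prob_cyl x"
  then obtain x where s: "s = request x" and len: "length x = n" and p: "0 < prob_cyl x" by blast
  have "sf_len x = 0 \<or> prob_floor (str_code x) (sf_len x - 1) = 0"
    using one_le_prob_floor_iff[of x "sf_len x - 1"] by auto
  then show "is_request n s"
    using str_code_valid_iff len p one_le_prob_floor_iff[of x "sf_len x"]
    unfolding is_request_def s request_def Let_def by auto
qed

lemma inj_request: "inj request"
  unfolding request_def using inj_str_code by (auto simp: inj_on_def)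

lemma kraft_inequality_requests: "\<forall>s. (\<Sum>t\<in>{t. t \<le> s \<and> is_request n t}. level_weight D (request_level t)) \<le> 1"
proof
  fix s
  define X where "X = {x. length x = n \<and> 0 < prob_cyl x \<and> request x \<le> s}"
  have eq: "{t. t \<le> s \<and> is_request n t} = request ` X" unfolding X_def is_request_iff by auto
  have "finite (request ` X)" unfolding eq[symmetric] by (rule finite_subset[of _ "{..s}"]) auto
  moreover have "inj_on request X" using inj_request by (simp add: inj_on_def inj_def)
  ultimately have finX: "finite X" by (rule finite_imageD)
  have "(\<Sum>t\<in>{t. t \<le> s \<and> is_request n t}. level_weight D (request_level t)) = (\<Sum>x\<in>X. level_weight D (sf_len x))"
    unfolding eq using inj_request by (simp add: sum.reindex inj_on_def inj_def request_level_def request_def)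
  also have "\<dots> \<le> (\<Sum>x\<in>X. prob_cyl x)"
    by (intro sum_mono) (auto simp: X_def sf_len_def intro: level_weight_sf_length_le[OF D])
  also have "\<dots> \<le> 1" unfolding prob_cyl_def using sum_measure_cyl_le_1[OF prob_space_P sets_P finX] X_def by auto
  finally show "(\<Sum>t\<in>{t. t \<le> s \<and> is_request n t}. level_weight D (request_level t)) \<le> 1" .
qed

lemma sf_node_level: "fst (sf_node x) = sf_len x"
  by (simp add: sf_node_def kc_node_def request_level_def request_def)

lemma sf_node_incomparable:
  assumes "length x = length y" "x \<noteq> y" "0 < prob_cyl x" "0 < prob_cyl y"
  shows "tree_incomparable D (sf_node x) (sf_node y)"
proof -
  have "is_request (length x) (request x)" "is_request (length x) (request y)"
    using assms by (auto simp: is_request_iff)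
  moreover have "request x \<noteq> request y" using assms(2) inj_request by (auto simp: inj_def)
  ultimately show ?thesis
    unfolding sf_node_def assms(1)[symmetric] by (rule kc_node_incomparable[OF D kraft_inequality_requests])
qed

lemma sf_node_valid: "0 < prob_cyl x \<Longrightarrow> snd (sf_node x) < D ^ fst (sf_node x)"
  unfolding sf_node_def by (intro kc_node_valid[OF D kraft_inequality_requests]) (auto simp: is_request_iff)

lemma shannon_fano_sf_code: "shannon_fano_code D P sf_code"
  unfolding shannon_fano_code_def
proof (intro conjI allI impI)
  fix x show "sf_code x \<noteq> None \<longleftrightarrow> 0 < measure P (cyl x)" unfolding sf_code_def prob_cyl_def by simp
next
  fix x w assume "sf_code x = Some w"
  then have w: "w = digits D (sf_len x) (snd (sf_node x))"
    by (auto simp: sf_code_def sf_node_level split: if_splits)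
  show "set w \<subseteq> {..<D}" using set_digits[of D] D w by simp
  show "length w = nat \<lceil>- log (real D) (measure P (cyl x))\<rceil>"
    using w by (simp add: sf_len_def sf_length_def prob_cyl_def)
next
  fix x y u v assume "length x = length y" "x \<noteq> y" "sf_code x = Some u" "sf_code y = Some v"
  then show "\<not> prefix u v"
    using sf_node_incomparable tree_incomparable_not_prefix[OF _ sf_node_valid sf_node_valid] D
    unfolding sf_code_def by (auto split: if_splits)
qed

lemma prefix_code_bayes_code: "prefix_code D (bayes_code c sf_code)"
  unfolding prefix_code_def
proof (intro conjI allI impI)
  have c: "nat_prefix_code D c" using computable_c unfolding computable_nat_code_def by simp
  fix x w assume "bayes_code c sf_code x = Some w"
  then obtain u where "w = c (length x) @ u" "sf_code x = Some u" unfolding bayes_code_def by auto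
  then show "set w \<subseteq> {..<D}"
    using c shannon_fano_sf_code unfolding nat_prefix_code_def shannon_fano_code_def by auto
next
  have c: "nat_prefix_code D c" using computable_c unfolding computable_nat_code_def by simp
  fix x y w v assume bx: "bayes_code c sf_code x = Some w" and "bayes_code c sf_code y = Some v"
    and p: "prefix w v"
  then obtain u1 v1 where w: "w = c (length x) @ u1" "sf_code x = Some u1"
    and v: "v = c (length y) @ v1" "sf_code y = Some v1" unfolding bayes_code_def by auto
  have "prefix (c (length x)) v" using p w by (metis append_prefixD)
  then have "prefix (c (length x)) (c (length y)) \<or> prefix (c (length y)) (c (length x))"
    using v by (intro prefix_same_cases) auto
  then have len: "length x = length y" using c unfolding nat_prefix_code_def by metis
  then have "prefix u1 v1" using p w v by simp
  then show "x = y" using shannon_fano_sf_code len w v unfolding shannon_fano_code_def by blast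
qed

lemma rec_pred_is_request_args: "rec_pred 2 (\<lambda>xs. is_request (xs ! 0) (xs ! 1))"
  unfolding is_request_def Let_def by (intro total_rec_intros) simp_all

lemma total_rec_kc_state_requests_args:
  "total_rec 2 (\<lambda>xs. kc_state D (is_request (xs ! 0)) request_level (xs ! 1))"
  by (rule total_rec_kc_state[OF rec_pred_is_request_args])
    (unfold request_level_def, intro total_rec_intros, simp)

lemma total_rec_kc_state_requests [total_rec_intros]:
  "total_rec n g \<Longrightarrow> total_rec n h \<Longrightarrow> total_rec n (\<lambda>xs. kc_state D (is_request (g xs)) request_level (h xs))"
  by (rule total_rec_comp2[OF total_rec_kc_state_requests_args])

lemma total_rec_code_c_args: "total_rec 1 (\<lambda>xs. list_encode (c (xs ! 0)))"
  using computable_c unfolding computable_nat_code_def by (intro total_rec_of_computable1) simp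

lemma total_rec_code_c [total_rec_intros]: "total_rec n g \<Longrightarrow> total_rec n (\<lambda>xs. list_encode (c (g xs)))"
  by (rule total_rec_comp1[OF total_rec_code_c_args])

definition codeword_code :: "nat \<Rightarrow> nat \<Rightarrow> nat" where
  "codeword_code i m = append_code (list_encode (c (length_code i)))
     (digits_code D m (kc_index D (kc_state D (is_request (length_code i)) request_level (prod_encode (i, m))) m))"

lemma total_rec_codeword_code_args: "total_rec 2 (\<lambda>xs. codeword_code (xs ! 0) (xs ! 1))"
  unfolding codeword_code_def by (intro total_rec_intros) simp_all

lemma bayes_code_eq_codeword_code:
  "0 < prob_cyl x \<Longrightarrow> map_option list_encode (bayes_code c sf_code x) = Some (codeword_code (str_code x) (sf_len x))"
  unfolding bayes_code_def sf_code_def codeword_code_def sf_node_def kc_node_def request_def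
  by (simp add: digits_code_eq request_level_def)

definition encoder :: "nat \<Rightarrow> nat option" where
  "encoder i = (if \<exists>m. 1 \<le> prob_floor i m then Some (codeword_code i (LEAST m. 1 \<le> prob_floor i m)) else None)"

lemma computable1_encoder: "computable1 encoder"
proof -
  have "rec_pred 2 (\<lambda>xs. 1 \<le> prob_floor (xs ! 1) (xs ! 0))"
    by (intro total_rec_intros) simp_all
  moreover have "total_rec 2 (\<lambda>xs. codeword_code (xs ! 1) (xs ! 0))"
    by (rule total_rec_comp2[OF total_rec_codeword_code_args]) (simp_all add: total_rec_proj)
  ultimately show ?thesis unfolding encoder_def by (rule computable1_Least)
qed

lemma encoder_str_code: "encoder (str_code x) = map_option list_encode (bayes_code c sf_code x)"
proof (cases "0 < prob_cyl x")
  case True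
  have "(LEAST m. 1 \<le> prob_floor (str_code x) m) = sf_len x"
    by (rule Least_equality) (use one_le_prob_floor_iff[of x] True in auto)
  then show ?thesis using one_le_prob_floor_iff[of x "sf_len x"] True bayes_code_eq_codeword_code[OF True]
    unfolding encoder_def by auto
qed (use one_le_prob_floor_iff[of x] in \<open>auto simp: encoder_def bayes_code_def sf_code_def\<close>)

definition decodes :: "nat \<Rightarrow> nat \<Rightarrow> bool" where
  "decodes s W \<longleftrightarrow> is_request (length_code (fst (prod_decode s))) s \<and>
     codeword_code (fst (prod_decode s)) (snd (prod_decode s)) = W"

lemma decodes_iff: "decodes s (list_encode w) \<longleftrightarrow> (\<exists>x. s = request x \<and> bayes_code c sf_code x = Some w)"
proof
  assume "decodes s (list_encode w)"
  then obtain x where s: "s = request x" and p: "0 < prob_cyl x"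
    and "codeword_code (str_code x) (sf_len x) = list_encode w"
    unfolding decodes_def is_request_iff by (auto simp: request_def)
  then have "bayes_code c sf_code x = Some w"
    using bayes_code_eq_codeword_code[OF p] by (cases "bayes_code c sf_code x") (auto simp: list_encode_eq)
  then show "\<exists>x. s = request x \<and> bayes_code c sf_code x = Some w" using s by blast
next
  assume "\<exists>x. s = request x \<and> bayes_code c sf_code x = Some w"
  then obtain x where s: "s = request x" and b: "bayes_code c sf_code x = Some w" by blast
  then have p: "0 < prob_cyl x" unfolding bayes_code_def sf_code_def by (auto split: if_splits)
  then show "decodes s (list_encode w)"
    using bayes_code_eq_codeword_code[OF p] b unfolding decodes_def s is_request_iff
    by (auto simp: request_def)
qed

definition decoder :: "nat \<Rightarrow> nat option" where
  "decoder W = (if \<exists>s. decodes s W then Some (fst (prod_decode (LEAST s. decodes s W))) else None)"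

lemma computable1_decoder: "computable1 decoder"
  unfolding decoder_def
proof (rule computable1_Least[where h="\<lambda>s W. fst (prod_decode s)"])
  show "rec_pred 2 (\<lambda>xs. decodes (xs ! 0) (xs ! 1))"
    unfolding decodes_def
    by (intro total_rec_intros rec_pred_comp2[OF rec_pred_is_request_args]
        total_rec_comp2[OF total_rec_codeword_code_args]) simp_all
qed (intro total_rec_intros, simp)

lemma decoder_list_encode: "decoder (list_encode w) = (if \<exists>x. bayes_code c sf_code x = Some w
     then Some (str_code (THE x. bayes_code c sf_code x = Some w)) else None)"
proof (cases "\<exists>x. bayes_code c sf_code x = Some w")
  case True
  then have ex: "\<exists>s. decodes s (list_encode w)" unfolding decodes_iff by blast
  then have "decodes (LEAST s. decodes s (list_encode w)) (list_encode w)" by (rule LeastI_ex)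
  then obtain x where s: "(LEAST s. decodes s (list_encode w)) = request x" and b: "bayes_code c sf_code x = Some w"
    unfolding decodes_iff by blast
  have "(THE x. bayes_code c sf_code x = Some w) = x"
    using b prefix_code_bayes_code unfolding prefix_code_def by blast
  then show ?thesis unfolding decoder_def using ex True s by (simp add: request_def)
next
  case False
  then show ?thesis unfolding decoder_def decodes_iff by auto
qed

lemma computable_code_bayes_code: "computable_code D (bayes_code c sf_code)"
  unfolding computable_code_def
  using computable1_encoder encoder_str_code computable1_decoder decoder_list_encode by blast

lemma bayes_code_length_bound:
  assumes "\<omega> \<in> barron_random D U P"
  shows "\<forall>\<^sub>F n in sequentially. \<exists>w. bayes_code c sf_code (pref \<omega> n) = Some w \<and>
      real (length w) - real (KC U (pref \<omega> n)) < real (length (c n)) + 1"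
  using assms unfolding barron_random_def
proof (elim CollectE eventually_mono)
  fix n assume "0 < measure P (cyl (pref \<omega> n)) \<and>
      real (KC U (pref \<omega> n)) + log (real D) (measure P (cyl (pref \<omega> n))) > 0"
  then have p: "0 < prob_cyl (pref \<omega> n)" and "real (sf_len (pref \<omega> n)) < real (KC U (pref \<omega> n)) + 1"
    unfolding prob_cyl_def sf_len_def by (auto intro: sf_length_less)
  moreover have "length (pref \<omega> n) = n" unfolding pref_def by simp
  ultimately show "\<exists>w. bayes_code c sf_code (pref \<omega> n) = Some w \<and>
      real (length w) - real (KC U (pref \<omega> n)) < real (length (c n)) + 1"
    unfolding bayes_code_def sf_code_def by (simp add: sf_node_level)
qed

end

theorem corollary1:
  fixes D :: nat
    and \<pi> :: "'b measure"
    and P\<theta> :: "'b \<Rightarrow> (nat \<Rightarrow> 'a::countable) measure"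
    and P :: "(nat \<Rightarrow> 'a) measure"
    and c :: "nat \<Rightarrow> nat list"
    and U :: "nat list \<Rightarrow> 'a list option"
  assumes "D \<ge> 2"
    and "universal_prefix_machine D U"
    and "prob_space \<pi>"
    and "P\<theta> \<in> \<pi> \<rightarrow>\<^sub>M prob_algebra seqspace"
    and "sets P = sets seqspace"
    and "prob_space P"
    and "\<forall>x. measure P (cyl x) = (\<integral>\<theta>. measure (P\<theta> \<theta>) (cyl x) \<partial>\<pi>)"
    and "computable_measure D P"
    and "computable_nat_code D c"
  shows "\<exists>C'. shannon_fano_code D P C' \<and>
           prefix_code D (bayes_code c C') \<and> computable_code D (bayes_code c C') \<and>
           (\<forall>\<omega>\<in>barron_random D U P. \<forall>\<^sub>F n in sequentially.
              \<exists>w. bayes_code c C' (pref \<omega> n) = Some w \<and>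
                  real (length w) - real (KC U (pref \<omega> n)) < real (length (c n)) + 1)"
proof -
  obtain f where "computable1 f"
    and "\<forall>x m. f (prod_encode (str_code (x::'a list), m)) = Some (nat \<lfloor>measure P (cyl x) * real D ^ m\<rfloor>)"
    using assms(8) unfolding computable_measure_def by blast
  then interpret computable_bayes_setting D P f c
    using assms(1,6,5,9) by (intro computable_bayes_setting.intro)
  show ?thesis
    using shannon_fano_sf_code prefix_code_bayes_code computable_code_bayes_code bayes_code_length_bound
    by blast
qed

end
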